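(* Let $G=(V,E)$ be a locally finite, connected, infinite graph, fix a vertex $x\in V$, and consider Bernoulli$(p)$ bond percolation on $G$. Then \[ p''_{\mathrm{cut,E}}=p'_{\mathrm{cut,E}}=p''_{\mathrm{cut,V}}=p'_{\mathrm{cut,V}}=p_{\mathrm{c}}. \]
   Context: Bernoulli$(p)$ bond percolation on $G$ keeps each edge independently as "open" with probability $p$ and otherwise declares it "closed"; $\mathbb{P}_p$ denotes its law. An open path is a path all of whose edges are open; $x\longleftrightarrow\infty$ is the event that the open cluster of $x$ has infinite diameter. The critical probability is $p_{\mathrm{c}}=\sup\{p\ge 0:\mathbb{P}_p(x\longleftrightarrow\infty)=0\}$. A vertex cutset separating $x$ from infinity is a set $\Pi\subset V$ such that the connected component of $x$ in the graph obtained from $G$ by deleting the vertices of $\Pi$ is finite; an edge cutset separating $x$ from infinity is a set $\Pi_E\subset E$ such that the connected component of $x$ in $G$ with the edges of $\Pi_E$ deleted is finite. For a vertex cutset $\Pi$ and $v\in\Pi$, $A(x,v,\Pi)$ is the event that $x$ is connected to $v$ by an open path that uses no vertex of $\Pi\setminus\{v\}$. For an edge cutset $\Pi_E$ and $e\in\Pi_E$, $A(x,e,\Pi_E)$ is the event that $e$ is open and $x$ is connected to $e$ by an open path that uses no edge of $\Pi_E\setminus\{e\}$. For a set $K\subset V$: its outer vertex boundary is $\partial_V K=\{z\notin K:\exists y\in K,\ y\sim z\}$ and its edge boundary is $\Delta K=\{(y,z)\in E: y\in K, z\notin K\}$. Let $\mathscr{B}_E=\{\Delta S: S\text{ is the vertex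 set of a finite connected subgraph containing }x\}$ (boundary edge cutsets) and $\mathscr{B}_V=\{\partial_V S: S\text{ is the vertex set of a finite connected subgraph containing }x\}$ (boundary vertex cutsets). Define $p'_{\mathrm{cut,V}}=\sup\{p\ge0:\inf_{\Pi}\sum_{v\in\Pi}\mathbb{P}_p[A(x,v,\Pi)]=0\}$ (infimum over all vertex cutsets separating $x$ from infinity), $p'_{\mathrm{cut,E}}=\sup\{p\ge0:\inf_{\Pi_E}\sum_{e\in\Pi_E}\mathbb{P}_p[A(x,e,\Pi_E)]=0\}$ (infimum over all edge cutsets separating $x$ from infinity), $p''_{\mathrm{cut,V}}=\sup\{p\ge0:\inf_{\Pi\in\mathscr{B}_V}\sum_{v\in\Pi}\mathbb{P}_p[A(x,v,\Pi)]=0\}$ and $p''_{\mathrm{cut,E}}=\sup\{p\ge0:\inf_{\Pi_E\in\mathscr{B}_E}\sum_{e\in\Pi_E}\mathbb{P}_p[A(x,e,\Pi_E)]=0\}$. *)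

theory Defs
  imports "HOL-Probability.Probability"
begin

definition simple_graph :: "'v set \<Rightarrow> 'v set set \<Rightarrow> bool" where
  "simple_graph V E \<longleftrightarrow> (\<forall>e\<in>E. \<exists>a b. a \<noteq> b \<and> a \<in> V \<and> b \<in> V \<and> e = {a, b})"

definition walk :: "'v set \<Rightarrow> 'v set set \<Rightarrow> 'v list \<Rightarrow> bool" where
  "walk V F xs \<longleftrightarrow> xs \<noteq> [] \<and> set xs \<subseteq> V \<and> successively (\<lambda>a b. {a, b} \<in> F) xs"

definition walk_edges :: "'v list \<Rightarrow> 'v set set" where
  "walk_edges xs = set (map (\<lambda>(a, b). {a, b}) (zip xs (tl xs)))"

definition connected_graph :: "'v set \<Rightarrow> 'v set set \<Rightarrow> bool" where
  "connected_graph V E \<longleftrightarrow>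
     (\<forall>u\<in>V. \<forall>v\<in>V. \<exists>xs. walk V E xs \<and> hd xs = u \<and> last xs = v)"

definition locally_finite :: "'v set \<Rightarrow> 'v set set \<Rightarrow> bool" where
  "locally_finite V E \<longleftrightarrow> (\<forall>v\<in>V. finite {e\<in>E. v \<in> e})"

text \<open>Bernoulli(p) bond percolation: product of Bernoulli(p) over the edges.
  A configuration \<omega> declares edge e open iff \<omega> e.\<close>

definition perc :: "'v set set \<Rightarrow> real \<Rightarrow> ('v set \<Rightarrow> bool) measure" where
  "perc E p = PiM E (\<lambda>_. measure_pmf (bernoulli_pmf p))"

definition Prob :: "'v set set \<Rightarrow> real \<Rightarrow> (('v set \<Rightarrow> bool) \<Rightarrow> bool) \<Rightarrow> real" where
  "Prob E p P = measure (perc E p) {\<omega> \<in> space (perc E p). P \<omega>}"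

definition open_walk :: "'v set \<Rightarrow> 'v set set \<Rightarrow> ('v set \<Rightarrow> bool) \<Rightarrow> 'v list \<Rightarrow> bool" where
  "open_walk V E \<omega> xs \<longleftrightarrow> walk V E xs \<and> (\<forall>e\<in>walk_edges xs. \<omega> e)"

definition cluster :: "'v set \<Rightarrow> 'v set set \<Rightarrow> ('v set \<Rightarrow> bool) \<Rightarrow> 'v \<Rightarrow> 'v set" where
  "cluster V E \<omega> x = {y. \<exists>xs. open_walk V E \<omega> xs \<and> hd xs = x \<and> last xs = y}"

text \<open>x \<longleftrightarrow> \<infinity>: the open cluster of x has infinite diameter (w.r.t. the graph distance of G),
  i.e. it contains vertices at arbitrarily large graph distance from x.\<close>
definition conn_inf :: "'v set \<Rightarrow> 'v set set \<Rightarrow> 'v \<Rightarrow> ('v set \<Rightarrow> bool) \<Rightarrow> bool" where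
  "conn_inf V E x \<omega> \<longleftrightarrow>
     (\<forall>n::nat. \<exists>y\<in>cluster V E \<omega> x.
        \<not> (\<exists>xs. walk V E xs \<and> hd xs = x \<and> last xs = y \<and> length xs \<le> Suc n))"

definition p_c :: "'v set \<Rightarrow> 'v set set \<Rightarrow> 'v \<Rightarrow> real" where
  "p_c V E x = Sup {p. 0 \<le> p \<and> Prob E p (conn_inf V E x) = 0}"

definition vertex_cutset :: "'v set \<Rightarrow> 'v set set \<Rightarrow> 'v \<Rightarrow> 'v set \<Rightarrow> bool" where
  "vertex_cutset V E x C \<longleftrightarrow> C \<subseteq> V \<and>
     finite {y. \<exists>xs. walk V E xs \<and> hd xs = x \<and> last xs = y \<and> set xs \<inter> C = {}}"

definition edge_cutset :: "'v set \<Rightarrow> 'v set set \<Rightarrow> 'v \<Rightarrow> 'v set set \<Rightarrow> bool" where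
  "edge_cutset V E x C \<longleftrightarrow> C \<subseteq> E \<and>
     finite {y. \<exists>xs. walk V (E - C) xs \<and> hd xs = x \<and> last xs = y}"

definition A_vertex :: "'v set \<Rightarrow> 'v set set \<Rightarrow> 'v \<Rightarrow> 'v \<Rightarrow> 'v set \<Rightarrow> ('v set \<Rightarrow> bool) \<Rightarrow> bool" where
  "A_vertex V E x v C \<omega> \<longleftrightarrow>
     (\<exists>xs. open_walk V E \<omega> xs \<and> hd xs = x \<and> last xs = v \<and> set xs \<inter> (C - {v}) = {})"

definition A_edge :: "'v set \<Rightarrow> 'v set set \<Rightarrow> 'v \<Rightarrow> 'v set \<Rightarrow> 'v set set \<Rightarrow> ('v set \<Rightarrow> bool) \<Rightarrow> bool" where
  "A_edge V E x e C \<omega> \<longleftrightarrow> \<omega> e \<and>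
     (\<exists>xs. open_walk V E \<omega> xs \<and> hd xs = x \<and> last xs \<in> e \<and> walk_edges xs \<inter> (C - {e}) = {})"

text \<open>(Possibly infinite) sums of nonnegative terms, valued in [0,\<infinity>].\<close>

definition vsum :: "'v set \<Rightarrow> 'v set set \<Rightarrow> 'v \<Rightarrow> real \<Rightarrow> 'v set \<Rightarrow> ennreal" where
  "vsum V E x p C = (\<integral>\<^sup>+ v. ennreal (Prob E p (A_vertex V E x v C)) \<partial>count_space C)"

definition esum :: "'v set \<Rightarrow> 'v set set \<Rightarrow> 'v \<Rightarrow> real \<Rightarrow> 'v set set \<Rightarrow> ennreal" where
  "esum V E x p C = (\<integral>\<^sup>+ e. ennreal (Prob E p (A_edge V E x e C)) \<partial>count_space C)"

definition conn_set :: "'v set \<Rightarrow> 'v set set \<Rightarrow> 'v \<Rightarrow> 'v set \<Rightarrow> bool" where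
  "conn_set V E x S \<longleftrightarrow> finite S \<and> x \<in> S \<and> S \<subseteq> V \<and>
     (\<forall>u\<in>S. \<forall>v\<in>S. \<exists>xs. walk S E xs \<and> hd xs = u \<and> last xs = v)"

definition vboundary :: "'v set \<Rightarrow> 'v set set \<Rightarrow> 'v set \<Rightarrow> 'v set" where
  "vboundary V E K = {z\<in>V. z \<notin> K \<and> (\<exists>y\<in>K. {y, z} \<in> E)}"

definition eboundary :: "'v set set \<Rightarrow> 'v set \<Rightarrow> 'v set set" where
  "eboundary E K = {e\<in>E. \<exists>y z. e = {y, z} \<and> y \<in> K \<and> z \<notin> K}"

definition B_V :: "'v set \<Rightarrow> 'v set set \<Rightarrow> 'v \<Rightarrow> 'v set set" where
  "B_V V E x = {vboundary V E S | S. conn_set V E x S}"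

definition B_E :: "'v set \<Rightarrow> 'v set set \<Rightarrow> 'v \<Rightarrow> 'v set set set" where
  "B_E V E x = {eboundary E S | S. conn_set V E x S}"

definition p'_cut_V :: "'v set \<Rightarrow> 'v set set \<Rightarrow> 'v \<Rightarrow> real" where
  "p'_cut_V V E x = Sup {p. 0 \<le> p \<and> (INF C\<in>{C. vertex_cutset V E x C}. vsum V E x p C) = 0}"

definition p'_cut_E :: "'v set \<Rightarrow> 'v set set \<Rightarrow> 'v \<Rightarrow> real" where
  "p'_cut_E V E x = Sup {p. 0 \<le> p \<and> (INF C\<in>{C. edge_cutset V E x C}. esum V E x p C) = 0}"

definition p''_cut_V :: "'v set \<Rightarrow> 'v set set \<Rightarrow> 'v \<Rightarrow> real" where
  "p''_cut_V V E x = Sup {p. 0 \<le> p \<and> (INF C\<in>B_V V E x. vsum V E x p C) = 0}"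

definition p''_cut_E :: "'v set \<Rightarrow> 'v set set \<Rightarrow> 'v \<Rightarrow> real" where
  "p''_cut_E V E x = Sup {p. 0 \<le> p \<and> (INF C\<in>B_E V E x. esum V E x p C) = 0}"

end

theory Submission
  imports Defs
begin

text \<open>
  An infinite open cluster crosses every cutset, so by the union bound \<open>\<theta>(p) = P\<^sub>p(x \<leftrightarrow> \<infinity>)\<close>
  is at most every cutset sum. Boundary cutsets are cutsets, and for finite connected \<open>S\<close> the vertex
  sum over \<open>\<partial>\<^sub>V S\<close> is at most the edge sum over \<open>\<Delta>S\<close>. This gives
  \<open>p''_E \<le> p''_V \<le> p'_V \<le> p_c\<close> and \<open>p''_E \<le> p'_E \<le> p_c\<close>; the suprema are finite as \<open>\<theta>(1) > 0\<close>.

  Conversely, the edge sum over \<open>\<Delta>S\<close> is the quantity \<open>\<phi>\<^sub>p(S) = p \<Sum>\<^sub>e P\<^sub>p(x is joined to e inside S)\<close>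
  (sum over \<open>e \<in> \<Delta>S\<close>) of Duminil-Copin and Tassion. Suppose \<open>\<phi>\<^sub>p(S) \<ge> c > 0\<close> for all finite
  connected \<open>S\<close> containing \<open>x\<close>, and let \<open>\<theta>\<^sub>n(r)\<close> be the probability that \<open>x\<close> is joined to the
  outside of the ball \<open>B\<^sub>n\<close>. By Russo's formula \<open>\<theta>\<^sub>n'(r)\<close> is a sum over closed pivotal edges.
  Splitting it according to the set of vertices of \<open>B\<^sub>n\<^sub>+\<^sub>1\<close> not joined to the outside of \<open>B\<^sub>n\<close>,
  and using that the event that this set equals \<open>S\<close> only depends on edges outside \<open>S\<close>, gives
  \<open>\<theta>\<^sub>n'(r) \<ge> c (1 - \<theta>\<^sub>n(r))\<close> for \<open>r \<ge> p\<close>. Integrating, \<open>\<theta>(q) \<ge> c(q - p) / (1 + c(q - p)) > 0\<close>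
  for \<open>q > p\<close>. Hence below \<open>p_c\<close> there are boundary edge cutsets of arbitrarily small sum.
\<close>

section \<open>Paths with prescribed vertices and edges\<close>

inductive joined :: "'v set \<Rightarrow> 'v set set \<Rightarrow> 'v \<Rightarrow> 'v \<Rightarrow> bool" for W F where
  joined_refl: "a \<in> W \<Longrightarrow> joined W F a a"
| joined_step: "{a, b} \<in> F \<Longrightarrow> a \<in> W \<Longrightarrow> joined W F b c \<Longrightarrow> joined W F a c"

lemma walk_edges_Cons_Cons: "walk_edges (a # b # xs) = insert {a, b} (walk_edges (b # xs))"
  by (simp add: walk_edges_def)

lemma walk_edges_singleton [simp]: "walk_edges [a] = {}"
  by (simp add: walk_edges_def)

lemma walk_edges_snoc: "xs \<noteq> [] \<Longrightarrow> walk_edges (xs @ [z]) = insert {last xs, z} (walk_edges xs)"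
  by (induction xs rule: induct_list012) (auto simp: walk_edges_Cons_Cons)

lemma finite_walk_edges: "finite (walk_edges xs)"
  by (simp add: walk_edges_def)

lemma walk_iff_edges: "walk W F xs \<longleftrightarrow> xs \<noteq> [] \<and> set xs \<subseteq> W \<and> walk_edges xs \<subseteq> F"
  by (induction xs rule: induct_list012) (auto simp: walk_def walk_edges_Cons_Cons)

lemma joined_imp_mem: "joined W F a b \<Longrightarrow> a \<in> W \<and> b \<in> W"
  by (induction rule: joined.induct) auto

lemma joined_iff_walk: "joined W F a b \<longleftrightarrow> (\<exists>xs. walk W F xs \<and> hd xs = a \<and> last xs = b)"
proof
  assume "joined W F a b"
  then show "\<exists>xs. walk W F xs \<and> hd xs = a \<and> last xs = b"
  proof (induction rule: joined.induct)
    case (joined_refl a)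
    then show ?case by (intro exI[of _ "[a]"]) (simp add: walk_iff_edges)
  next
    case (joined_step a b c)
    then obtain xs where "walk W F (b # xs)" "last (b # xs) = c"
      by (metis list.collapse walk_def)
    with joined_step show ?case
      by (intro exI[of _ "a # b # xs"]) (auto simp: walk_iff_edges walk_edges_Cons_Cons)
  qed
next
  assume "\<exists>xs. walk W F xs \<and> hd xs = a \<and> last xs = b"
  then obtain xs where "walk W F xs" "hd xs = a" "last xs = b" by blast
  then show "joined W F a b"
  proof (induction xs arbitrary: a rule: induct_list012)
    case (2 c)
    then show ?case by (auto simp: walk_iff_edges intro: joined_refl)
  next
    case (3 c d ys)
    then show ?case
      by (auto simp: walk_iff_edges walk_edges_Cons_Cons intro: joined_step)
  qed (simp add: walk_def)
qed

lemma joined_trans: "joined W F a b \<Longrightarrow> joined W F b c \<Longrightarrow> joined W F a c"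
  by (induction rule: joined.induct) (auto intro: joined_step)

lemma joined_snoc: "joined W F a b \<Longrightarrow> {b, c} \<in> F \<Longrightarrow> c \<in> W \<Longrightarrow> joined W F a c"
  by (metis joined_imp_mem joined_refl joined_step joined_trans)

lemma joined_sym: "joined W F a b \<Longrightarrow> joined W F b a"
  by (induction rule: joined.induct) (auto intro: joined_refl joined_snoc simp: insert_commute)

lemma joined_mono: "joined W F a b \<Longrightarrow> W \<subseteq> W' \<Longrightarrow> F \<subseteq> F' \<Longrightarrow> joined W' F' a b"
  by (induction rule: joined.induct) (auto intro: joined.intros)

lemma joined_insert_edgeD:
  "joined W (insert e F) a b \<Longrightarrow> joined W F a b \<or> (\<exists>u v. e = {u, v} \<and> joined W F a u \<and> joined W F v b)"
proof (induction rule: joined.induct)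
  case (joined_refl a)
  then show ?case by (auto intro: joined.intros)
next
  case (joined_step a b c)
  show ?case
  proof (cases "{a, b} \<in> F")
    case True
    with joined_step show ?thesis by (auto intro: joined.intros)
  next
    case False
    with joined_step have e: "e = {a, b}" by auto
    from joined_step.IH show ?thesis
    proof (elim disjE exE conjE)
      assume "joined W F b c"
      with e joined_step show ?thesis by (blast intro: joined_refl)
    next
      fix u v assume "e = {u, v}" "joined W F b u" "joined W F v c"
      with e joined_step show ?thesis
        by (cases "v = a") (auto simp: doubleton_eq_iff intro: joined_refl)
    qed
  qed
qed

lemma joined_first_exit:
  assumes "joined W F a b" "a \<in> K"
  shows "joined (W \<inter> K) {e\<in>F. e \<subseteq> K} a b \<or>
    (\<exists>u v. {u, v} \<in> F \<and> u \<in> K \<and> v \<notin> K \<and> v \<in> W \<and> joined (W \<inter> K) {e\<in>F. e \<subseteq> K} a u)"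
  using assms
proof (induction rule: joined.induct)
  case (joined_refl a)
  then show ?case by (auto intro: joined.intros)
next
  case (joined_step a b c)
  show ?case
  proof (cases "b \<in> K")
    case True
    with joined_step have "{a, b} \<in> {e\<in>F. e \<subseteq> K}" "a \<in> W \<inter> K" by auto
    with True joined_step.IH show ?thesis by (blast intro: joined.joined_step)
  next
    case False
    with joined_step show ?thesis by (blast dest: joined_imp_mem intro: joined.joined_refl)
  qed
qed

lemma joined_within_closed:
  assumes "joined W F a b" "a \<in> K" "\<And>u v. {u, v} \<in> F \<Longrightarrow> u \<in> K \<Longrightarrow> v \<in> W \<Longrightarrow> v \<in> K"
  shows "joined (W \<inter> K) {e\<in>F. e \<subseteq> K} a b"
  using joined_first_exit[OF assms(1,2)] assms(3) by blast

lemma joined_stays_within: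
  assumes "joined W F a b" "a \<in> K" "\<And>e. e \<in> F \<Longrightarrow> e \<subseteq> K"
  shows "b \<in> K"
  using joined_within_closed[OF assms(1,2)] assms(3) by (blast dest: joined_imp_mem)

lemma joined_first_hit_vertex:
  assumes "joined W F a b" "a \<notin> C"
  shows "joined (W - C) F a b \<or> (\<exists>v\<in>C. joined (W - (C - {v})) F a v)"
proof -
  from assms(2) have "a \<in> - C" by simp
  from joined_first_exit[OF assms(1) this] show ?thesis
  proof (elim disjE exE conjE)
    assume "joined (W \<inter> - C) {e\<in>F. e \<subseteq> - C} a b"
    then show ?thesis by (auto elim: joined_mono)
  next
    fix u v assume uv: "{u, v} \<in> F" "v \<notin> - C" "v \<in> W"
      and au: "joined (W \<inter> - C) {e\<in>F. e \<subseteq> - C} a u"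
    from au have "joined (W - (C - {v})) F a u" by (rule joined_mono) auto
    with uv have "joined (W - (C - {v})) F a v" by (blast intro: joined_snoc)
    with uv show ?thesis by blast
  qed
qed

lemma joined_first_hit_edge:
  "joined W F a b \<Longrightarrow> joined W (F - C) a b \<or> (\<exists>e\<in>C \<inter> F. \<exists>u\<in>e. joined W (F - (C - {e})) a u)"
proof (induction rule: joined.induct)
  case (joined_refl a)
  then show ?case by (auto intro: joined.intros)
next
  case (joined_step a b c)
  show ?case
  proof (cases "{a, b} \<in> C")
    case True
    with joined_step show ?thesis by (blast intro: joined.joined_refl)
  next
    case False
    with joined_step show ?thesis by (blast intro: joined.joined_step)
  qed
qed

lemma joined_remove_edges:
  assumes "joined W F a b" "\<And>u v. {u, v} \<in> F \<Longrightarrow> u \<in> W \<Longrightarrow> joined W (F - D) v b \<Longrightarrow> {u, v} \<notin> D"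
  shows "joined W (F - D) a b"
  using assms by (induction rule: joined.induct) (auto intro: joined.intros)

lemma open_walk_iff: "open_walk V E \<omega> xs \<longleftrightarrow> walk V {e\<in>E. \<omega> e} xs"
  unfolding open_walk_def walk_iff_edges by auto

lemma A_vertex_iff: "A_vertex V E x v C \<omega> \<longleftrightarrow> joined (V - (C - {v})) {e\<in>E. \<omega> e} x v"
  unfolding A_vertex_def open_walk_iff joined_iff_walk walk_iff_edges by blast

lemma A_edge_iff:
  "A_edge V E x e C \<omega> \<longleftrightarrow> \<omega> e \<and> (\<exists>a\<in>e. joined V ({e\<in>E. \<omega> e} - (C - {e})) x a)"
proof -
  have "open_walk V E \<omega> xs \<and> walk_edges xs \<inter> (C - {e}) = {} \<longleftrightarrow> walk V ({e\<in>E. \<omega> e} - (C - {e})) xs"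
    for xs unfolding open_walk_iff walk_iff_edges by auto
  then show ?thesis unfolding A_edge_def joined_iff_walk by blast
qed

lemma vertex_cutset_iff: "vertex_cutset V E x C \<longleftrightarrow> C \<subseteq> V \<and> finite {y. joined (V - C) E x y}"
proof -
  have "{y. \<exists>xs. walk V E xs \<and> hd xs = x \<and> last xs = y \<and> set xs \<inter> C = {}} = {y. joined (V - C) E x y}"
    unfolding joined_iff_walk walk_iff_edges by blast
  then show ?thesis unfolding vertex_cutset_def by simp
qed

lemma edge_cutset_iff: "edge_cutset V E x C \<longleftrightarrow> C \<subseteq> E \<and> finite {y. joined V (E - C) x y}"
  unfolding edge_cutset_def joined_iff_walk by simp

lemma conn_set_iff:
  "conn_set V E x S \<longleftrightarrow> finite S \<and> x \<in> S \<and> S \<subseteq> V \<and> (\<forall>u\<in>S. \<forall>v\<in>S. joined S E u v)"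
  unfolding conn_set_def joined_iff_walk by simp

section \<open>Random subsets of a finite set\<close>

text \<open>\<open>bern_prob F r Q\<close> is the probability that a random subset of the finite set \<open>F\<close>,
  containing each element independently with probability \<open>r\<close>, satisfies \<open>Q\<close>.\<close>

definition bern_weight :: "'e set \<Rightarrow> real \<Rightarrow> 'e set \<Rightarrow> real" where
  "bern_weight F r A = r ^ card A * (1 - r) ^ card (F - A)"

definition bern_prob :: "'e set \<Rightarrow> real \<Rightarrow> ('e set \<Rightarrow> bool) \<Rightarrow> real" where
  "bern_prob F r Q = (\<Sum>A\<in>Pow F. if Q A then bern_weight F r A else 0)"

lemma bern_prob_cong: "(\<And>A. A \<subseteq> F \<Longrightarrow> Q A = Q' A) \<Longrightarrow> bern_prob F r Q = bern_prob F r Q'"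
  unfolding bern_prob_def by (rule sum.cong) auto

lemma bern_weight_nonneg: "0 \<le> r \<Longrightarrow> r \<le> 1 \<Longrightarrow> 0 \<le> bern_weight F r A"
  unfolding bern_weight_def by simp

lemma bern_prob_nonneg: "0 \<le> r \<Longrightarrow> r \<le> 1 \<Longrightarrow> 0 \<le> bern_prob F r Q"
  unfolding bern_prob_def by (rule sum_nonneg) (auto simp: bern_weight_nonneg)

lemma bern_prob_mono:
  "0 \<le> r \<Longrightarrow> r \<le> 1 \<Longrightarrow> (\<And>A. A \<subseteq> F \<Longrightarrow> Q A \<Longrightarrow> Q' A) \<Longrightarrow> bern_prob F r Q \<le> bern_prob F r Q'"
  unfolding bern_prob_def by (rule sum_mono) (auto simp: bern_weight_nonneg)

lemma bern_prob_split: "bern_prob F r Q = bern_prob F r (\<lambda>A. Q A \<and> P A) + bern_prob F r (\<lambda>A. Q A \<and> \<not> P A)"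
  unfolding bern_prob_def by (subst sum.distrib[symmetric]) (rule sum.cong, auto)

lemma bern_prob_empty: "bern_prob {} r Q = (if Q {} then 1 else 0)"
  unfolding bern_prob_def bern_weight_def by simp

lemma bern_prob_insert:
  assumes "finite F" "e \<notin> F"
  shows "bern_prob (insert e F) r Q = r * bern_prob F r (\<lambda>A. Q (insert e A)) + (1 - r) * bern_prob F r Q"
proof -
  have inj: "inj_on (insert e) (Pow F)"
    using assms(2) by (intro inj_onI) (metis PowD insert_ident subsetD)
  have weight_in: "bern_weight (insert e F) r (insert e A) = r * bern_weight F r A" if "A \<subseteq> F" for A
  proof -
    from that assms have "finite A" "e \<notin> A" "insert e F - insert e A = F - A"
      by (auto intro: finite_subset)
    then show ?thesis unfolding bern_weight_def by simp
  qed
  have weight_out: "bern_weight (insert e F) r A = (1 - r) * bern_weight F r A" if "A \<subseteq> F" for A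
  proof -
    from that assms have "insert e F - A = insert e (F - A)" "e \<notin> F - A" "finite (F - A)" by auto
    then show ?thesis unfolding bern_weight_def by simp
  qed
  have "bern_prob (insert e F) r Q = (\<Sum>A\<in>Pow F. if Q A then bern_weight (insert e F) r A else 0)
      + (\<Sum>A\<in>insert e ` Pow F. if Q A then bern_weight (insert e F) r A else 0)"
    unfolding bern_prob_def Pow_insert using assms by (intro sum.union_disjoint) auto
  also have "(\<Sum>A\<in>insert e ` Pow F. if Q A then bern_weight (insert e F) r A else 0)
      = r * bern_prob F r (\<lambda>A. Q (insert e A))"
    unfolding sum.reindex[OF inj] bern_prob_def sum_distrib_left by (rule sum.cong) (auto simp: weight_in)
  also have "(\<Sum>A\<in>Pow F. if Q A then bern_weight (insert e F) r A else 0) = (1 - r) * bern_prob F r Q"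
    unfolding bern_prob_def sum_distrib_left by (rule sum.cong) (auto simp: weight_out)
  finally show ?thesis by simp
qed

lemma bern_prob_True: "finite F \<Longrightarrow> bern_prob F r (\<lambda>_. True) = 1"
  by (induction F rule: finite_induct) (simp_all add: bern_prob_empty bern_prob_insert algebra_simps)

lemma bern_prob_const: "finite F \<Longrightarrow> bern_prob F r (\<lambda>_. P) = (if P then 1 else 0)"
  using bern_prob_True[of F r] by (cases P) (simp_all add: bern_prob_def)

lemma bern_prob_not: "finite F \<Longrightarrow> bern_prob F r (\<lambda>A. \<not> Q A) = 1 - bern_prob F r Q"
  using bern_prob_split[of F r "\<lambda>_. True" Q] bern_prob_True[of F r] by simp

lemma bern_prob_impossible: "finite F \<Longrightarrow> (\<And>A. A \<subseteq> F \<Longrightarrow> \<not> Q A) \<Longrightarrow> bern_prob F r Q = 0"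
  using bern_prob_cong[of F Q "\<lambda>_. False" r] by (simp add: bern_prob_const)

lemma bern_prob_one: "finite F \<Longrightarrow> bern_prob F 1 Q = (if Q F then 1 else 0)"
  by (induction F arbitrary: Q rule: finite_induct) (simp_all add: bern_prob_empty bern_prob_insert)

lemma bern_prob_product:
  assumes "finite F" "finite G" "F \<inter> G = {}"
  shows "bern_prob (F \<union> G) r (\<lambda>A. P (A \<inter> F) \<and> Q (A \<inter> G)) = bern_prob F r P * bern_prob G r Q"
  using assms
proof (induction F arbitrary: P rule: finite_induct)
  case empty
  have "bern_prob ({} \<union> G) r (\<lambda>A. P (A \<inter> {}) \<and> Q (A \<inter> G)) = bern_prob G r (\<lambda>A. P {} \<and> Q A)"
    by (auto intro: bern_prob_cong simp: Int_absorb2)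
  then show ?case
    by (cases "P {}") (simp_all add: bern_prob_empty bern_prob_def bern_weight_def)
next
  case (insert e F)
  have fin: "finite (F \<union> G)" "e \<notin> F \<union> G" using insert by auto
  have "bern_prob (insert e F \<union> G) r (\<lambda>A. P (A \<inter> insert e F) \<and> Q (A \<inter> G))
      = r * bern_prob (F \<union> G) r (\<lambda>A. P (insert e A \<inter> insert e F) \<and> Q (insert e A \<inter> G))
        + (1 - r) * bern_prob (F \<union> G) r (\<lambda>A. P (A \<inter> insert e F) \<and> Q (A \<inter> G))"
    using bern_prob_insert[OF fin] by simp
  also have "bern_prob (F \<union> G) r (\<lambda>A. P (insert e A \<inter> insert e F) \<and> Q (insert e A \<inter> G))
      = bern_prob (F \<union> G) r (\<lambda>A. P (insert e (A \<inter> F)) \<and> Q (A \<inter> G))"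
  proof (rule bern_prob_cong)
    fix A assume "A \<subseteq> F \<union> G"
    with insert have "insert e A \<inter> insert e F = insert e (A \<inter> F)" "insert e A \<inter> G = A \<inter> G" by auto
    then show "(P (insert e A \<inter> insert e F) \<and> Q (insert e A \<inter> G)) = (P (insert e (A \<inter> F)) \<and> Q (A \<inter> G))"
      by simp
  qed
  also have "bern_prob (F \<union> G) r (\<lambda>A. P (A \<inter> insert e F) \<and> Q (A \<inter> G))
      = bern_prob (F \<union> G) r (\<lambda>A. P (A \<inter> F) \<and> Q (A \<inter> G))"
    using insert by (intro bern_prob_cong) (auto simp: Int_insert_right)
  also have "bern_prob (F \<union> G) r (\<lambda>A. P (insert e (A \<inter> F)) \<and> Q (A \<inter> G))
      = bern_prob F r (\<lambda>B. P (insert e B)) * bern_prob G r Q"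
    using insert.prems by (intro insert.IH) auto
  also have "bern_prob (F \<union> G) r (\<lambda>A. P (A \<inter> F) \<and> Q (A \<inter> G)) = bern_prob F r P * bern_prob G r Q"
    using insert.prems by (intro insert.IH) auto
  also have "r * (bern_prob F r (\<lambda>B. P (insert e B)) * bern_prob G r Q) + (1 - r) * (bern_prob F r P * bern_prob G r Q)
      = bern_prob (insert e F) r P * bern_prob G r Q"
    using insert.hyps by (simp add: bern_prob_insert algebra_simps)
  finally show ?case .
qed

lemma bern_prob_marginal:
  assumes "finite F" "G \<subseteq> F"
  shows "bern_prob F r (\<lambda>A. Q (A \<inter> G)) = bern_prob G r Q"
proof -
  have "bern_prob F r (\<lambda>A. Q (A \<inter> G))
      = bern_prob (G \<union> (F - G)) r (\<lambda>A. Q (A \<inter> G) \<and> (\<lambda>_. True) (A \<inter> (F - G)))"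
    using assms by (simp add: Un_absorb1)
  also have "\<dots> = bern_prob G r Q"
    using assms by (subst bern_prob_product) (auto intro: finite_subset simp: bern_prob_True)
  finally show ?thesis .
qed

lemma bern_prob_partition:
  assumes "finite T" "\<And>A. A \<subseteq> F \<Longrightarrow> f A \<in> T"
  shows "bern_prob F r Q = (\<Sum>t\<in>T. bern_prob F r (\<lambda>A. f A = t \<and> Q A))"
proof -
  have "bern_prob F r Q = (\<Sum>A\<in>Pow F. \<Sum>t\<in>T. if f A = t \<and> Q A then bern_weight F r A else 0)"
    unfolding bern_prob_def using assms by (intro sum.cong refl) (simp add: if_distrib[symmetric] sum.delta)
  also have "\<dots> = (\<Sum>t\<in>T. bern_prob F r (\<lambda>A. f A = t \<and> Q A))"
    unfolding bern_prob_def by (rule sum.swap)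
  finally show ?thesis .
qed

definition bern_deriv :: "'e set \<Rightarrow> real \<Rightarrow> ('e set \<Rightarrow> bool) \<Rightarrow> real" where
  "bern_deriv F r Q =
     (\<Sum>e\<in>F. bern_prob (F - {e}) r (\<lambda>A. Q (insert e A)) - bern_prob (F - {e}) r Q)"

lemma bern_deriv_insert:
  assumes "finite F" "e \<notin> F"
  shows "bern_deriv (insert e F) r Q = (bern_prob F r (\<lambda>A. Q (insert e A)) - bern_prob F r Q)
     + r * bern_deriv F r (\<lambda>A. Q (insert e A)) + (1 - r) * bern_deriv F r Q"
proof -
  have "bern_deriv (insert e F) r Q = (bern_prob F r (\<lambda>A. Q (insert e A)) - bern_prob F r Q)
      + (\<Sum>e'\<in>F. bern_prob (insert e F - {e'}) r (\<lambda>A. Q (insert e' A)) - bern_prob (insert e F - {e'}) r Q)"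
    unfolding bern_deriv_def using assms by (simp add: sum.insert)
  also have "(\<Sum>e'\<in>F. bern_prob (insert e F - {e'}) r (\<lambda>A. Q (insert e' A)) - bern_prob (insert e F - {e'}) r Q)
     = (\<Sum>e'\<in>F. r * (bern_prob (F - {e'}) r (\<lambda>A. Q (insert e (insert e' A))) - bern_prob (F - {e'}) r (\<lambda>A. Q (insert e A)))
         + (1 - r) * (bern_prob (F - {e'}) r (\<lambda>A. Q (insert e' A)) - bern_prob (F - {e'}) r Q))"
  proof (rule sum.cong[OF refl])
    fix e' assume "e' \<in> F"
    with assms have eq: "insert e F - {e'} = insert e (F - {e'})"
      and fin: "finite (F - {e'})" "e \<notin> F - {e'}" by auto
    show "bern_prob (insert e F - {e'}) r (\<lambda>A. Q (insert e' A)) - bern_prob (insert e F - {e'}) r Q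
       = r * (bern_prob (F - {e'}) r (\<lambda>A. Q (insert e (insert e' A))) - bern_prob (F - {e'}) r (\<lambda>A. Q (insert e A)))
         + (1 - r) * (bern_prob (F - {e'}) r (\<lambda>A. Q (insert e' A)) - bern_prob (F - {e'}) r Q)"
      unfolding eq bern_prob_insert[OF fin] by (simp add: insert_commute algebra_simps)
  qed
  also have "\<dots> = r * bern_deriv F r (\<lambda>A. Q (insert e A)) + (1 - r) * bern_deriv F r Q"
    unfolding bern_deriv_def by (simp add: sum.distrib sum_distrib_left)
  finally show ?thesis by simp
qed

lemma has_real_derivative_bern_prob:
  "finite F \<Longrightarrow> ((\<lambda>r. bern_prob F r Q) has_real_derivative bern_deriv F r Q) (at r)"
proof (induction F arbitrary: Q rule: finite_induct)
  case empty
  then show ?case by (simp add: bern_prob_empty bern_deriv_def)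
next
  case (insert e F)
  have "((\<lambda>r. r * bern_prob F r (\<lambda>A. Q (insert e A)) + (1 - r) * bern_prob F r Q) has_real_derivative
     (1 * bern_prob F r (\<lambda>A. Q (insert e A)) + bern_deriv F r (\<lambda>A. Q (insert e A)) * r
      + ((0 - 1) * bern_prob F r Q + bern_deriv F r Q * (1 - r)))) (at r)"
    by (intro DERIV_add DERIV_mult DERIV_diff DERIV_const DERIV_ident insert.IH)
  then show ?case using insert by (simp add: bern_prob_insert bern_deriv_insert algebra_simps)
qed

definition upclosed :: "'e set \<Rightarrow> ('e set \<Rightarrow> bool) \<Rightarrow> bool" where
  "upclosed F Q \<longleftrightarrow> (\<forall>A B. A \<subseteq> B \<longrightarrow> B \<subseteq> F \<longrightarrow> Q A \<longrightarrow> Q B)"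

lemma bern_deriv_nonneg:
  assumes "upclosed F Q" "0 \<le> r" "r \<le> 1"
  shows "0 \<le> bern_deriv F r Q"
  unfolding bern_deriv_def
proof (rule sum_nonneg)
  fix e assume "e \<in> F"
  with assms have "bern_prob (F - {e}) r Q \<le> bern_prob (F - {e}) r (\<lambda>A. Q (insert e A))"
    unfolding upclosed_def by (intro bern_prob_mono) blast+
  then show "0 \<le> bern_prob (F - {e}) r (\<lambda>A. Q (insert e A)) - bern_prob (F - {e}) r Q" by simp
qed

lemma bern_prob_mono_param:
  assumes "finite F" "upclosed F Q" "0 \<le> p" "p \<le> q" "q \<le> 1"
  shows "bern_prob F p Q \<le> bern_prob F q Q"
proof (rule DERIV_nonneg_imp_nondecreasing[of p q])
  fix r assume "p \<le> r" "r \<le> q"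
  with assms have "0 \<le> bern_deriv F r Q" by (intro bern_deriv_nonneg) auto
  then show "\<exists>y. ((\<lambda>r. bern_prob F r Q) has_real_derivative y) (at r) \<and> 0 \<le> y"
    using has_real_derivative_bern_prob[OF assms(1)] by blast
qed fact

section \<open>Bernoulli bond percolation\<close>

lemma space_perc: "space (perc E r) = PiE E (\<lambda>_. UNIV)"
  unfolding perc_def by (simp add: space_PiM)

lemma prob_space_perc: "prob_space (perc E r)"
  unfolding perc_def by (rule prob_space_PiM) (simp add: prob_space_measure_pmf)

text \<open>\<open>bernoulli_pmf\<close> truncates its parameter to \<open>[0, 1]\<close>.\<close>

lemma perc_ge_1: "1 \<le> r \<Longrightarrow> perc E r = perc E 1"
proof -
  assume "1 \<le> r"
  then have "bernoulli_pmf r = bernoulli_pmf 1" by (intro pmf_eqI) (simp add: bernoulli_pmf.rep_eq)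
  then show ?thesis unfolding perc_def by simp
qed

lemma Prob_nonneg: "0 \<le> Prob E r P"
  unfolding Prob_def by simp

lemma ennreal_Prob: "ennreal (Prob E r P) = emeasure (perc E r) {\<omega>\<in>space (perc E r). P \<omega>}"
proof -
  interpret prob_space "perc E r" by (rule prob_space_perc)
  show ?thesis unfolding Prob_def by (simp add: emeasure_eq_measure)
qed

definition cylinder :: "'e set \<Rightarrow> 'e set \<Rightarrow> 'e set \<Rightarrow> ('e \<Rightarrow> bool) set" where
  "cylinder E F A = {\<omega>\<in>PiE E (\<lambda>_. UNIV). \<forall>e\<in>F. \<omega> e = (e \<in> A)}"

lemma cylinder_eq_prod_emb:
  "F \<subseteq> E \<Longrightarrow> cylinder E F A = prod_emb E (\<lambda>_. measure_pmf (bernoulli_pmf r)) F (PiE F (\<lambda>e. {e \<in> A}))"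
  unfolding cylinder_def by (auto simp: prod_emb_iff restrict_PiE_iff PiE_iff)

lemma sets_cylinder: "finite F \<Longrightarrow> F \<subseteq> E \<Longrightarrow> cylinder E F A \<in> sets (perc E r)"
  unfolding perc_def by (subst cylinder_eq_prod_emb[of F E A r], assumption) (rule sets_PiM_I, auto)

lemma measure_cylinder:
  assumes "finite F" "F \<subseteq> E" "A \<subseteq> F" "0 \<le> r" "r \<le> 1"
  shows "measure (perc E r) (cylinder E F A) = bern_weight F r A"
proof -
  have "emeasure (perc E r) (cylinder E F A)
      = (\<Prod>e\<in>F. emeasure (measure_pmf (bernoulli_pmf r)) {e \<in> A})"
    unfolding perc_def using assms
    by (subst cylinder_eq_prod_emb[of F E A r], simp) (rule emeasure_PiM_emb, auto simp: prob_space_measure_pmf)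
  also have "\<dots> = ennreal (\<Prod>e\<in>F. if e \<in> A then r else 1 - r)"
    using assms by (subst prod_ennreal[symmetric]) (auto intro: prod.cong simp: emeasure_pmf_single)
  also have "(\<Prod>e\<in>F. if e \<in> A then r else 1 - r) = bern_weight F r A"
    using assms prod.If_cases[OF assms(1), of "\<lambda>e. e \<in> A" "\<lambda>_. r" "\<lambda>_. 1 - r"]
    unfolding bern_weight_def by (simp add: Int_absorb1 Diff_eq)
  finally show ?thesis
    using assms unfolding measure_def by (simp add: bern_weight_nonneg)
qed

lemma finite_event_eq_UN_cylinder:
  "finite F \<Longrightarrow> {\<omega>\<in>PiE E (\<lambda>_. UNIV). Q {e\<in>F. \<omega> e}} = (\<Union>A\<in>{A\<in>Pow F. Q A}. cylinder E F A)"
proof (intro equalityI subsetI)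
  fix \<omega> assume "\<omega> \<in> {\<omega>\<in>PiE E (\<lambda>_. UNIV). Q {e\<in>F. \<omega> e}}"
  then show "\<omega> \<in> (\<Union>A\<in>{A\<in>Pow F. Q A}. cylinder E F A)"
    unfolding cylinder_def by (intro UN_I[of "{e\<in>F. \<omega> e}"]) auto
next
  fix \<omega> assume "\<omega> \<in> (\<Union>A\<in>{A\<in>Pow F. Q A}. cylinder E F A)"
  then obtain A where "A \<subseteq> F" "Q A" "\<omega> \<in> PiE E (\<lambda>_. UNIV)" "\<forall>e\<in>F. \<omega> e = (e \<in> A)"
    unfolding cylinder_def by auto
  moreover from this have "{e\<in>F. \<omega> e} = A" by auto
  ultimately show "\<omega> \<in> {\<omega>\<in>PiE E (\<lambda>_. UNIV). Q {e\<in>F. \<omega> e}}" by simp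
qed

lemma sets_perc_finite_event:
  "finite F \<Longrightarrow> F \<subseteq> E \<Longrightarrow> {\<omega>\<in>space (perc E r). Q {e\<in>F. \<omega> e}} \<in> sets (perc E r)"
  unfolding space_perc finite_event_eq_UN_cylinder by (intro sets.finite_UN) (auto intro: sets_cylinder)

lemma measure_perc_finite_event:
  assumes "finite F" "F \<subseteq> E" "0 \<le> r" "r \<le> 1"
  shows "measure (perc E r) {\<omega>\<in>space (perc E r). Q {e\<in>F. \<omega> e}} = bern_prob F r Q"
proof -
  interpret prob_space "perc E r" by (rule prob_space_perc)
  have "measure (perc E r) (\<Union>A\<in>{A\<in>Pow F. Q A}. cylinder E F A)
      = (\<Sum>A\<in>{A\<in>Pow F. Q A}. measure (perc E r) (cylinder E F A))"
    using assms sets_cylinder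
    by (intro finite_measure_finite_Union) (auto simp: disjoint_family_on_def cylinder_def)
  also have "\<dots> = (\<Sum>A\<in>{A\<in>Pow F. Q A}. bern_weight F r A)"
    using assms by (intro sum.cong refl measure_cylinder) auto
  also have "\<dots> = bern_prob F r Q"
    unfolding bern_prob_def using assms sum.inter_filter[of "Pow F" "bern_weight F r" Q] by simp
  finally show ?thesis
    unfolding space_perc finite_event_eq_UN_cylinder[OF assms(1)] .
qed

lemma emeasure_UN_le_nn_integral:
  assumes "countable I" "\<And>i. i \<in> I \<Longrightarrow> A i \<in> sets M"
  shows "emeasure M (\<Union>i\<in>I. A i) \<le> (\<integral>\<^sup>+i. emeasure M (A i) \<partial>count_space I)"
proof -
  have "emeasure M (\<Union>i\<in>I. A i) = (\<integral>\<^sup>+\<omega>. indicator (\<Union>i\<in>I. A i) \<omega> \<partial>M)"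
    using assms by (intro nn_integral_indicator[symmetric] sets.countable_UN'') auto
  also have "\<dots> \<le> (\<integral>\<^sup>+\<omega>. (\<integral>\<^sup>+i. indicator (A i) \<omega> \<partial>count_space I) \<partial>M)"
  proof (rule nn_integral_mono)
    fix \<omega>
    show "indicator (\<Union>i\<in>I. A i) \<omega> \<le> (\<integral>\<^sup>+i. indicator (A i) \<omega> \<partial>count_space I)"
    proof (cases "\<omega> \<in> (\<Union>i\<in>I. A i)")
      case True
      then obtain j where "j \<in> I" "\<omega> \<in> A j" by auto
      then have "indicator (A j) \<omega> \<le> (\<integral>\<^sup>+i. indicator (A i) \<omega> \<partial>count_space I)"
        by (intro nn_integral_ge_point)
      with True \<open>\<omega> \<in> A j\<close> show ?thesis by simp
    qed simp
  qed
  also have "\<dots> = (\<integral>\<^sup>+i. (\<integral>\<^sup>+\<omega>. indicator (A i) \<omega> \<partial>M) \<partial>count_space I)"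
    using assms by (intro nn_integral_count_space_nn_integral) auto
  also have "\<dots> = (\<integral>\<^sup>+i. emeasure M (A i) \<partial>count_space I)"
    using assms by (intro nn_integral_cong) simp
  finally show ?thesis .
qed

section \<open>Locally finite connected graphs\<close>

locale percolation_graph =
  fixes V :: "'v set" and E :: "'v set set" and x :: 'v
  assumes simple: "simple_graph V E" and finite_degree: "locally_finite V E"
    and connected: "connected_graph V E" and infinite_vertices: "infinite V"
    and root_vertex: "x \<in> V"
begin

lemma edgeE:
  assumes "e \<in> E"
  obtains a b where "a \<noteq> b" "a \<in> V" "b \<in> V" "e = {a, b}"
  using assms simple unfolding simple_graph_def by blast

lemma edge_vertices: "{a, b} \<in> E \<Longrightarrow> a \<in> V \<and> b \<in> V"
  by (erule edgeE) (auto simp: doubleton_eq_iff)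

lemma finite_edge: "e \<in> E \<Longrightarrow> finite e"
  by (erule edgeE) auto

lemma finite_neighbours: "finite B \<Longrightarrow> B \<subseteq> V \<Longrightarrow> finite {z. \<exists>y\<in>B. {y, z} \<in> E}"
proof -
  assume B: "finite B" "B \<subseteq> V"
  have "{z. \<exists>y\<in>B. {y, z} \<in> E} \<subseteq> \<Union>(\<Union>y\<in>B. {e\<in>E. y \<in> e})" by blast
  moreover have "finite (\<Union>(\<Union>y\<in>B. {e\<in>E. y \<in> e}))"
    using B finite_degree finite_edge unfolding locally_finite_def by (intro finite_Union) blast+
  ultimately show ?thesis by (rule finite_subset)
qed

lemma joined_from_root: "y \<in> V \<Longrightarrow> joined V E x y"
  using connected root_vertex unfolding connected_graph_def joined_iff_walk by blast

definition graph_ball :: "nat \<Rightarrow> 'v set" where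
  "graph_ball n = {y. \<exists>xs. walk V E xs \<and> hd xs = x \<and> last xs = y \<and> length xs \<le> Suc n}"

definition edges_within :: "'v set \<Rightarrow> 'v set set" where
  "edges_within S = {e\<in>E. e \<subseteq> S}"

lemma root_in_graph_ball: "x \<in> graph_ball n"
  unfolding graph_ball_def using root_vertex by (intro CollectI exI[of _ "[x]"]) (auto simp: walk_iff_edges)

lemma graph_ball_subset: "graph_ball n \<subseteq> V"
  unfolding graph_ball_def walk_iff_edges by auto

lemma graph_ball_mono: "m \<le> n \<Longrightarrow> graph_ball m \<subseteq> graph_ball n"
  unfolding graph_ball_def by (auto intro: le_trans)

lemma graph_ball_Suc_mono: "graph_ball n \<subseteq> graph_ball (Suc n)"
  by (rule graph_ball_mono) simp

lemma graph_ball_step: "y \<in> graph_ball n \<Longrightarrow> {y, z} \<in> E \<Longrightarrow> z \<in> graph_ball (Suc n)"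
proof -
  assume "y \<in> graph_ball n" "{y, z} \<in> E"
  then obtain xs where xs: "walk V E xs" "hd xs = x" "last xs = y" "length xs \<le> Suc n"
    unfolding graph_ball_def by blast
  with \<open>{y, z} \<in> E\<close> edge_vertices show ?thesis
    unfolding graph_ball_def
    by (intro CollectI exI[of _ "xs @ [z]"]) (auto simp: walk_iff_edges walk_edges_snoc)
qed

lemma graph_ball_Suc_subset: "graph_ball (Suc n) \<subseteq> graph_ball n \<union> {z. \<exists>y\<in>graph_ball n. {y, z} \<in> E}"
proof
  fix z assume "z \<in> graph_ball (Suc n)"
  then obtain xs where xs: "walk V E xs" "hd xs = x" "last xs = z" "length xs \<le> Suc (Suc n)"
    unfolding graph_ball_def by blast
  show "z \<in> graph_ball n \<union> {z. \<exists>y\<in>graph_ball n. {y, z} \<in> E}"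
  proof (cases "length xs \<le> Suc n")
    case True
    with xs show ?thesis unfolding graph_ball_def by blast
  next
    case False
    then obtain ys w where ys: "xs = ys @ [w]" by (cases xs rule: rev_exhaust) auto
    with False have "ys \<noteq> []" by auto
    with xs ys have "walk V E ys" "hd ys = x" "{last ys, z} \<in> E" "length ys \<le> Suc n"
      by (auto simp: walk_iff_edges walk_edges_snoc)
    then show ?thesis unfolding graph_ball_def by blast
  qed
qed

lemma finite_graph_ball: "finite (graph_ball n)"
proof (induction n)
  case 0
  have "graph_ball 0 \<subseteq> {x}"
  proof
    fix y assume "y \<in> graph_ball 0"
    then obtain xs where "walk V E xs" "hd xs = x" "last xs = y" "length xs \<le> 1"
      unfolding graph_ball_def by auto
    then show "y \<in> {x}" by (cases xs) (auto simp: walk_iff_edges)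
  qed
  then show ?case by (rule finite_subset) simp
next
  case (Suc n)
  then show ?case
    using graph_ball_subset finite_neighbours by (intro finite_subset[OF graph_ball_Suc_subset]) auto
qed

lemma vertex_in_graph_ball: "y \<in> V \<Longrightarrow> \<exists>n. y \<in> graph_ball n"
proof -
  assume "y \<in> V"
  then obtain xs where "walk V E xs" "hd xs = x" "last xs = y"
    using joined_from_root unfolding joined_iff_walk by blast
  then show ?thesis unfolding graph_ball_def by (intro exI[of _ "length xs"]) auto
qed

lemma finite_subset_graph_ball: "finite K \<Longrightarrow> K \<subseteq> V \<Longrightarrow> \<exists>n. K \<subseteq> graph_ball n"
proof (induction K rule: finite_induct)
  case (insert y K)
  then obtain n m where "K \<subseteq> graph_ball n" "y \<in> graph_ball m" using vertex_in_graph_ball by blast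
  then show ?case
    using graph_ball_mono[of n "max n m"] graph_ball_mono[of m "max n m"] by (intro exI[of _ "max n m"]) auto
qed simp

lemma vertex_outside_graph_ball: "\<exists>y\<in>V. y \<notin> graph_ball n"
  using infinite_vertices finite_graph_ball[of n] by (meson finite_subset subsetI)

lemma finite_edges_within: "finite S \<Longrightarrow> finite (edges_within S)"
  unfolding edges_within_def by (rule finite_subset[of _ "Pow S"]) auto

lemma edges_within_subset: "edges_within S \<subseteq> E"
  unfolding edges_within_def by auto

lemma edges_within_mono: "S \<subseteq> K \<Longrightarrow> edges_within S \<subseteq> edges_within K"
  unfolding edges_within_def by auto

lemma countable_vertices: "countable V"
proof -
  have "V = (\<Union>n. graph_ball n)" using vertex_in_graph_ball graph_ball_subset by blast
  moreover have "countable (\<Union>n. graph_ball n)"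
    by (rule countable_UN) (auto intro: countable_finite finite_graph_ball)
  ultimately show ?thesis by simp
qed

lemma countable_edges: "countable E"
proof -
  have "E \<subseteq> (\<Union>n. edges_within (graph_ball n))"
  proof
    fix e assume "e \<in> E"
    then obtain a b where ab: "a \<in> V" "b \<in> V" "e = {a, b}" by (rule edgeE)
    then obtain n where "{a, b} \<subseteq> graph_ball n" using finite_subset_graph_ball[of "{a, b}"] by auto
    with ab \<open>e \<in> E\<close> show "e \<in> (\<Union>n. edges_within (graph_ball n))" unfolding edges_within_def by blast
  qed
  moreover have "countable (\<Union>n. edges_within (graph_ball n))"
    by (rule countable_UN) (auto intro: countable_finite finite_edges_within finite_graph_ball)
  ultimately show ?thesis by (rule countable_subset)
qed

lemma joined_exits_graph_ball:
  assumes "joined V F a y" "a \<in> graph_ball (Suc n)" "y \<notin> graph_ball n" "F \<subseteq> E"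
  shows "\<exists>y'. y' \<notin> graph_ball n \<and> joined V (F \<inter> edges_within (graph_ball (Suc n))) a y'"
proof (cases "a \<in> graph_ball n")
  case False
  with assms(2) graph_ball_subset show ?thesis by (blast intro: joined_refl)
next
  case True
  let ?K = "graph_ball n"
  from joined_first_exit[OF assms(1) True] assms(3)
  obtain u v where uv: "{u, v} \<in> F" "u \<in> ?K" "v \<notin> ?K" "v \<in> V"
    and au: "joined (V \<inter> ?K) {e\<in>F. e \<subseteq> ?K} a u"
    by (auto dest: joined_imp_mem)
  have "v \<in> graph_ball (Suc n)" using uv assms(4) graph_ball_step by blast
  with uv assms(4) graph_ball_Suc_mono have "{u, v} \<in> F \<inter> edges_within (graph_ball (Suc n))"
    unfolding edges_within_def by auto
  moreover from au assms(4) graph_ball_Suc_mono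
  have "joined V (F \<inter> edges_within (graph_ball (Suc n))) a u"
    by (elim joined_mono) (auto simp: edges_within_def)
  ultimately show ?thesis using uv by (blast intro: joined_snoc)
qed

lemma conn_inf_iff:
  "conn_inf V E x \<omega> \<longleftrightarrow> (\<forall>n. \<exists>y. joined V {e\<in>E. \<omega> e} x y \<and> y \<notin> graph_ball n)"
  unfolding conn_inf_def cluster_def open_walk_iff graph_ball_def joined_iff_walk by blast

lemma sets_perc_joined:
  assumes "W \<subseteq> V"
  shows "{\<omega>\<in>space (perc E r). joined W ({e\<in>E. \<omega> e} - D) a b} \<in> sets (perc E r)"
proof -
  let ?L = "{xs. walk W (E - D) xs \<and> hd xs = a \<and> last xs = b}"
  have "{\<omega>\<in>space (perc E r). joined W ({e\<in>E. \<omega> e} - D) a b}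
      = (\<Union>xs\<in>?L. {\<omega>\<in>space (perc E r). (\<lambda>A. A = walk_edges xs) {e\<in>walk_edges xs. \<omega> e}})"
    unfolding joined_iff_walk walk_iff_edges by auto
  also have "\<dots> \<in> sets (perc E r)"
  proof (rule sets.countable_UN'')
    have "?L \<subseteq> lists V" using assms unfolding walk_iff_edges by auto
    then show "countable ?L" using countable_vertices by (meson countable_lists countable_subset)
  next
    fix xs assume "xs \<in> ?L"
    then show "{\<omega>\<in>space (perc E r). (\<lambda>A. A = walk_edges xs) {e\<in>walk_edges xs. \<omega> e}} \<in> sets (perc E r)"
      unfolding walk_iff_edges by (intro sets_perc_finite_event finite_walk_edges) auto
  qed
  finally show ?thesis .
qed

lemma sets_perc_open: "e \<in> E \<Longrightarrow> {\<omega>\<in>space (perc E r). \<omega> e} \<in> sets (perc E r)"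
  using sets_perc_finite_event[of "{e}" E r "\<lambda>A. e \<in> A"] by auto

lemma sets_A_vertex: "{\<omega>\<in>space (perc E r). A_vertex V E x v C \<omega>} \<in> sets (perc E r)"
  unfolding A_vertex_iff using sets_perc_joined[of "V - (C - {v})" r "{}" x v] by auto

lemma sets_A_edge:
  assumes "e \<in> E"
  shows "{\<omega>\<in>space (perc E r). A_edge V E x e C \<omega>} \<in> sets (perc E r)"
proof -
  have "{\<omega>\<in>space (perc E r). A_edge V E x e C \<omega>} = {\<omega>\<in>space (perc E r). \<omega> e} \<inter>
      (\<Union>a\<in>e. {\<omega>\<in>space (perc E r). joined V ({e\<in>E. \<omega> e} - (C - {e})) x a})"
    unfolding A_edge_iff by auto
  also have "\<dots> \<in> sets (perc E r)"
    using assms finite_edge sets_perc_open sets_perc_joined[of V r] by (intro sets.Int sets.finite_UN) auto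
  finally show ?thesis .
qed

lemma Prob_le_emeasure_UN:
  assumes "countable I" "\<And>i. i \<in> I \<Longrightarrow> {\<omega>\<in>space (perc E r). Q i \<omega>} \<in> sets (perc E r)"
    and "\<And>\<omega>. P \<omega> \<Longrightarrow> \<exists>i\<in>I. Q i \<omega>"
  shows "ennreal (Prob E r P) \<le> (\<integral>\<^sup>+i. ennreal (Prob E r (Q i)) \<partial>count_space I)"
proof -
  interpret prob_space "perc E r" by (rule prob_space_perc)
  have "ennreal (Prob E r P) \<le> emeasure (perc E r) (\<Union>i\<in>I. {\<omega>\<in>space (perc E r). Q i \<omega>})"
    unfolding ennreal_Prob using assms by (intro emeasure_mono sets.countable_UN'') auto
  also have "\<dots> \<le> (\<integral>\<^sup>+i. ennreal (Prob E r (Q i)) \<partial>count_space I)"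
    unfolding ennreal_Prob using assms by (intro emeasure_UN_le_nn_integral) auto
  finally show ?thesis .
qed

lemma Prob_conn_inf_le_vsum:
  assumes "vertex_cutset V E x C"
  shows "ennreal (Prob E r (conn_inf V E x)) \<le> vsum V E x r C"
  unfolding vsum_def
proof (rule Prob_le_emeasure_UN)
  have C: "C \<subseteq> V" "finite {y. joined (V - C) E x y}" using assms unfolding vertex_cutset_iff by auto
  then show "countable C" using countable_vertices countable_subset by blast
  show "\<exists>v\<in>C. A_vertex V E x v C \<omega>" if "conn_inf V E x \<omega>" for \<omega>
  proof (cases "x \<in> C")
    case True
    then show ?thesis unfolding A_vertex_iff using root_vertex by (blast intro: joined_refl)
  next
    case False
    have "{y. joined (V - C) E x y} \<subseteq> V" by (auto dest: joined_imp_mem)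
    with C obtain n where n: "{y. joined (V - C) E x y} \<subseteq> graph_ball n"
      using finite_subset_graph_ball by blast
    from that obtain y where y: "joined V {e\<in>E. \<omega> e} x y" "y \<notin> graph_ball n"
      unfolding conn_inf_iff by blast
    have "\<not> joined (V - C) {e\<in>E. \<omega> e} x y"
      using n y(2) by (auto dest: joined_mono[where W' = "V - C" and F' = E])
    with joined_first_hit_vertex[OF y(1) False] show ?thesis unfolding A_vertex_iff by blast
  qed
qed (rule sets_A_vertex)

lemma Prob_conn_inf_le_esum:
  assumes "edge_cutset V E x C"
  shows "ennreal (Prob E r (conn_inf V E x)) \<le> esum V E x r C"
  unfolding esum_def
proof (rule Prob_le_emeasure_UN)
  have C: "C \<subseteq> E" "finite {y. joined V (E - C) x y}" using assms unfolding edge_cutset_iff by auto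
  then show "countable C" using countable_edges countable_subset by blast
  show "{\<omega>\<in>space (perc E r). A_edge V E x e C \<omega>} \<in> sets (perc E r)" if "e \<in> C" for e
    using that C sets_A_edge by blast
  show "\<exists>e\<in>C. A_edge V E x e C \<omega>" if "conn_inf V E x \<omega>" for \<omega>
  proof -
    have "{y. joined V (E - C) x y} \<subseteq> V" by (auto dest: joined_imp_mem)
    with C obtain n where n: "{y. joined V (E - C) x y} \<subseteq> graph_ball n"
      using finite_subset_graph_ball by blast
    from that obtain y where y: "joined V {e\<in>E. \<omega> e} x y" "y \<notin> graph_ball n"
      unfolding conn_inf_iff by blast
    have "\<not> joined V ({e\<in>E. \<omega> e} - C) x y"
      using n y(2) by (auto dest: joined_mono[where W' = V and F' = "E - C"])
    with joined_first_hit_edge[OF y(1), of C] show ?thesis unfolding A_edge_iff by blast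
  qed
qed

section \<open>Boundary cutsets\<close>

lemma finite_vboundary: "finite S \<Longrightarrow> S \<subseteq> V \<Longrightarrow> finite (vboundary V E S)"
  unfolding vboundary_def by (rule finite_subset[OF _ finite_neighbours]) auto

lemma finite_eboundary: "finite S \<Longrightarrow> S \<subseteq> V \<Longrightarrow> finite (eboundary E S)"
proof -
  assume S: "finite S" "S \<subseteq> V"
  have "eboundary E S \<subseteq> (\<Union>y\<in>S. {e\<in>E. y \<in> e})" unfolding eboundary_def by auto
  moreover have "finite (\<Union>y\<in>S. {e\<in>E. y \<in> e})" using S finite_degree unfolding locally_finite_def by blast
  ultimately show ?thesis by (rule finite_subset)
qed

lemma eboundary_subset: "eboundary E S \<subseteq> E"
  unfolding eboundary_def by auto

lemma eboundary_notin_edges_within: "e \<in> eboundary E S \<Longrightarrow> e \<notin> edges_within S"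
  unfolding edges_within_def eboundary_def by auto

lemma vertex_cutset_vboundary:
  assumes "finite S" "x \<in> S"
  shows "vertex_cutset V E x (vboundary V E S)"
proof -
  have "joined ((V - vboundary V E S) \<inter> S) {e\<in>E. e \<subseteq> S} x y" if "joined (V - vboundary V E S) E x y" for y
    using that assms(2) by (rule joined_within_closed) (auto simp: vboundary_def)
  then have "{y. joined (V - vboundary V E S) E x y} \<subseteq> S" by (auto dest: joined_imp_mem)
  with assms(1) show ?thesis unfolding vertex_cutset_iff vboundary_def by (auto intro: finite_subset)
qed

lemma edge_cutset_eboundary:
  assumes "finite S" "x \<in> S"
  shows "edge_cutset V E x (eboundary E S)"
proof -
  have "joined (V \<inter> S) {e\<in>E - eboundary E S. e \<subseteq> S} x y" if "joined V (E - eboundary E S) x y" for y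
    using that assms(2) by (rule joined_within_closed) (auto simp: eboundary_def)
  then have "{y. joined V (E - eboundary E S) x y} \<subseteq> S" by (auto dest: joined_imp_mem)
  with assms(1) show ?thesis unfolding edge_cutset_iff using eboundary_subset by (auto intro: finite_subset)
qed

definition reach_prob :: "real \<Rightarrow> 'v set \<Rightarrow> 'v set \<Rightarrow> real" where
  "reach_prob r S e = bern_prob (edges_within S) r (\<lambda>A. \<exists>y\<in>e. joined V A x y)"

definition phi :: "real \<Rightarrow> 'v set \<Rightarrow> real" where
  "phi p S = (\<Sum>e\<in>eboundary E S. p * reach_prob p S e)"

lemma reach_prob_nonneg: "0 \<le> r \<Longrightarrow> r \<le> 1 \<Longrightarrow> 0 \<le> reach_prob r S e"
  unfolding reach_prob_def by (rule bern_prob_nonneg)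

lemma phi_nonneg: "0 \<le> p \<Longrightarrow> p \<le> 1 \<Longrightarrow> 0 \<le> phi p S"
  unfolding phi_def by (intro sum_nonneg mult_nonneg_nonneg reach_prob_nonneg)

lemma A_edge_eboundary_iff:
  assumes "x \<in> S" "e \<in> eboundary E S"
  shows "A_edge V E x e (eboundary E S) \<omega> \<longleftrightarrow>
    \<omega> e \<and> (\<exists>y\<in>e. joined V ({e'\<in>E. \<omega> e'} \<inter> edges_within S) x y)"
proof -
  let ?F = "{e'\<in>E. \<omega> e'} - (eboundary E S - {e})"
  have "(\<exists>y\<in>e. joined V ?F x y) \<longleftrightarrow> (\<exists>y\<in>e. joined V ({e'\<in>E. \<omega> e'} \<inter> edges_within S) x y)"
  proof
    assume "\<exists>y\<in>e. joined V ?F x y"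
    then obtain y where y: "y \<in> e" "joined V ?F x y" by blast
    from joined_first_exit[OF y(2) assms(1)] show "\<exists>y\<in>e. joined V ({e'\<in>E. \<omega> e'} \<inter> edges_within S) x y"
    proof (elim disjE exE conjE)
      assume "joined (V \<inter> S) {e'\<in>?F. e' \<subseteq> S} x y"
      then have "joined V ({e'\<in>E. \<omega> e'} \<inter> edges_within S) x y"
        by (rule joined_mono) (auto simp: edges_within_def)
      with y(1) show ?thesis by blast
    next
      fix u v assume uv: "{u, v} \<in> ?F" "u \<in> S" "v \<notin> S"
        and "joined (V \<inter> S) {e'\<in>?F. e' \<subseteq> S} x u"
      then have "joined V ({e'\<in>E. \<omega> e'} \<inter> edges_within S) x u"
        by (elim joined_mono) (auto simp: edges_within_def)
      moreover from uv have "{u, v} = e" unfolding eboundary_def by blast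
      ultimately show ?thesis by blast
    qed
  next
    assume "\<exists>y\<in>e. joined V ({e'\<in>E. \<omega> e'} \<inter> edges_within S) x y"
    moreover have "{e'\<in>E. \<omega> e'} \<inter> edges_within S \<subseteq> ?F" using eboundary_notin_edges_within by blast
    ultimately show "\<exists>y\<in>e. joined V ?F x y" by (meson joined_mono order_refl)
  qed
  then show ?thesis unfolding A_edge_iff by simp
qed

lemma Prob_A_edge_eboundary:
  assumes "finite S" "x \<in> S" "e \<in> eboundary E S" "0 \<le> r" "r \<le> 1"
  shows "Prob E r (A_edge V E x e (eboundary E S)) = r * reach_prob r S e"
proof -
  let ?F = "insert e (edges_within S)"
  let ?Q = "\<lambda>A. e \<in> A \<and> (\<exists>y\<in>e. joined V (A \<inter> edges_within S) x y)"
  have e: "e \<notin> edges_within S" "finite (edges_within S)"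
    using assms eboundary_notin_edges_within finite_edges_within by auto
  have F: "finite ?F" "?F \<subseteq> E" using assms e eboundary_subset edges_within_subset by auto
  have "{e'\<in>?F. \<omega> e'} \<inter> edges_within S = {e'\<in>E. \<omega> e'} \<inter> edges_within S" for \<omega>
    using edges_within_subset by auto
  then have event: "{\<omega>\<in>space (perc E r). A_edge V E x e (eboundary E S) \<omega>}
      = {\<omega>\<in>space (perc E r). ?Q {e'\<in>?F. \<omega> e'}}"
    unfolding A_edge_eboundary_iff[OF assms(2,3)] by auto
  have "Prob E r (A_edge V E x e (eboundary E S)) = bern_prob ?F r ?Q"
    unfolding Prob_def event by (rule measure_perc_finite_event[OF F assms(4,5)])
  also have "\<dots> = r * bern_prob (edges_within S) r (\<lambda>A. ?Q (insert e A))
      + (1 - r) * bern_prob (edges_within S) r ?Q"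
    using e by (intro bern_prob_insert)
  also have "bern_prob (edges_within S) r ?Q = 0"
    using e by (intro bern_prob_impossible) auto
  also have "bern_prob (edges_within S) r (\<lambda>A. ?Q (insert e A)) = reach_prob r S e"
    unfolding reach_prob_def using e by (intro bern_prob_cong) (auto simp: insert_absorb Int_absorb2 Int_insert_left)
  finally show ?thesis by simp
qed

lemma esum_eboundary:
  assumes "finite S" "x \<in> S" "S \<subseteq> V" "0 \<le> r" "r \<le> 1"
  shows "esum V E x r (eboundary E S) = ennreal (phi r S)"
proof -
  have "esum V E x r (eboundary E S) = ennreal (\<Sum>e\<in>eboundary E S. Prob E r (A_edge V E x e (eboundary E S)))"
    unfolding esum_def using assms finite_eboundary
    by (simp add: nn_integral_count_space_finite sum_ennreal Prob_nonneg)
  also have "\<dots> = ennreal (phi r S)"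
    unfolding phi_def using assms by (simp add: Prob_A_edge_eboundary)
  finally show ?thesis .
qed

lemma A_vertex_vboundary_imp_A_edge:
  assumes "x \<in> S" "v \<in> vboundary V E S" "A_vertex V E x v (vboundary V E S) \<omega>"
  shows "\<exists>e\<in>eboundary E S. v \<in> e \<and> A_edge V E x e (eboundary E S) \<omega>"
proof -
  have "v \<notin> S" using assms(2) unfolding vboundary_def by auto
  with assms(3) have "joined (V - (vboundary V E S - {v})) {e\<in>E. \<omega> e} x v"
    unfolding A_vertex_iff by simp
  from joined_first_exit[OF this assms(1)] \<open>v \<notin> S\<close>
  obtain u w where uw: "{u, w} \<in> E" "\<omega> {u, w}" "u \<in> S" "w \<notin> S" "w \<in> V - (vboundary V E S - {v})"
    and xu: "joined ((V - (vboundary V E S - {v})) \<inter> S) {e\<in>{e\<in>E. \<omega> e}. e \<subseteq> S} x u"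
    by (blast dest: joined_imp_mem)
  from uw have "w = v" unfolding vboundary_def by blast
  from uw have e: "{u, w} \<in> eboundary E S" unfolding eboundary_def by blast
  from xu have "joined V ({e\<in>E. \<omega> e} - (eboundary E S - {{u, w}})) x u"
    by (rule joined_mono) (auto simp: eboundary_def)
  with uw e \<open>w = v\<close> show ?thesis unfolding A_edge_iff by blast
qed

lemma vsum_vboundary_le_esum_eboundary:
  assumes S: "finite S" "x \<in> S" "S \<subseteq> V"
  shows "vsum V E x r (vboundary V E S) \<le> esum V E x r (eboundary E S)"
proof -
  interpret prob_space "perc E r" by (rule prob_space_perc)
  let ?vb = "vboundary V E S" and ?eb = "eboundary E S"
  let ?Pv = "\<lambda>v. Prob E r (A_vertex V E x v ?vb)"
  let ?Pe = "\<lambda>e. Prob E r (A_edge V E x e ?eb)"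
  have fin: "finite ?vb" "finite ?eb" using finite_vboundary finite_eboundary S by auto
  have sets: "{\<omega>\<in>space (perc E r). A_edge V E x e ?eb \<omega>} \<in> sets (perc E r)" if "e \<in> ?eb" for e
    using that sets_A_edge eboundary_subset by blast
  have "?Pv v \<le> (\<Sum>e\<in>{e\<in>?eb. v \<in> e}. ?Pe e)" if "v \<in> ?vb" for v
  proof -
    have "?Pv v \<le> measure (perc E r) (\<Union>e\<in>{e\<in>?eb. v \<in> e}. {\<omega>\<in>space (perc E r). A_edge V E x e ?eb \<omega>})"
      unfolding Prob_def using A_vertex_vboundary_imp_A_edge[OF S(2) that] sets fin
      by (intro finite_measure_mono sets.finite_UN) auto
    also have "\<dots> \<le> (\<Sum>e\<in>{e\<in>?eb. v \<in> e}. ?Pe e)"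
      unfolding Prob_def using sets fin by (intro finite_measure_subadditive_finite) auto
    finally show ?thesis .
  qed
  then have "(\<Sum>v\<in>?vb. ?Pv v) \<le> (\<Sum>v\<in>?vb. \<Sum>e\<in>{e\<in>?eb. v \<in> e}. ?Pe e)"
    by (intro sum_mono)
  also have "\<dots> = (\<Sum>e\<in>?eb. \<Sum>v\<in>{v\<in>?vb. v \<in> e}. ?Pe e)"
    using fin by (rule sum.swap_restrict)
  also have "\<dots> \<le> (\<Sum>e\<in>?eb. ?Pe e)"
  proof (rule sum_mono)
    fix e assume "e \<in> ?eb"
    then obtain y z where "e = {y, z}" "y \<in> S" "z \<notin> S" unfolding eboundary_def by blast
    then have "{v\<in>?vb. v \<in> e} \<subseteq> {z}" unfolding vboundary_def by auto
    then have "card {v\<in>?vb. v \<in> e} \<le> 1" using card_mono[of "{z}"] by fastforce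
    then show "(\<Sum>v\<in>{v\<in>?vb. v \<in> e}. ?Pe e) \<le> ?Pe e"
      using Prob_nonneg[of E r] by (simp add: mult_left_le_one_le)
  qed
  finally have "ennreal (\<Sum>v\<in>?vb. ?Pv v) \<le> ennreal (\<Sum>e\<in>?eb. ?Pe e)"
    by (rule ennreal_leI)
  then show ?thesis
    unfolding vsum_def esum_def using fin by (simp add: nn_integral_count_space_finite sum_ennreal Prob_nonneg)
qed

section \<open>The differential inequality\<close>

definition ball_edges :: "nat \<Rightarrow> 'v set set" where
  "ball_edges n = edges_within (graph_ball (Suc n))"

definition escapes :: "nat \<Rightarrow> 'v set set \<Rightarrow> bool" where
  "escapes n A \<longleftrightarrow> (\<exists>y. joined V A x y \<and> y \<notin> graph_ball n)"

definition escaping_vertices :: "nat \<Rightarrow> 'v set set \<Rightarrow> 'v set" where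
  "escaping_vertices n A = {v\<in>graph_ball (Suc n). \<exists>y. joined V A v y \<and> y \<notin> graph_ball n}"

definition trapped_set :: "nat \<Rightarrow> 'v set set \<Rightarrow> 'v set" where
  "trapped_set n A = graph_ball (Suc n) - escaping_vertices n A"

definition closed_pivotal :: "nat \<Rightarrow> 'v set \<Rightarrow> 'v set set \<Rightarrow> bool" where
  "closed_pivotal n e A \<longleftrightarrow> e \<notin> A \<and> escapes n (insert e A) \<and> \<not> escapes n A"

lemma finite_ball_edges: "finite (ball_edges n)"
  unfolding ball_edges_def by (intro finite_edges_within finite_graph_ball)

lemma ball_edges_subset: "ball_edges n \<subseteq> E"
  unfolding ball_edges_def by (rule edges_within_subset)

lemma ball_edge_vertices: "{a, b} \<in> ball_edges n \<Longrightarrow> a \<in> graph_ball (Suc n) \<and> b \<in> graph_ball (Suc n)"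
  unfolding ball_edges_def edges_within_def by auto

lemma escapes_mono: "A \<subseteq> B \<Longrightarrow> escapes n A \<Longrightarrow> escapes n B"
  unfolding escapes_def by (meson joined_mono order_refl)

lemma upclosed_escapes: "upclosed F (escapes n)"
  unfolding upclosed_def using escapes_mono by blast

lemma escaping_vertices_mono: "A \<subseteq> B \<Longrightarrow> escaping_vertices n A \<subseteq> escaping_vertices n B"
  unfolding escaping_vertices_def by (blast intro: joined_mono)

lemma not_escapes_iff: "\<not> escapes n A \<longleftrightarrow> x \<in> trapped_set n A"
  unfolding escapes_def trapped_set_def escaping_vertices_def using root_in_graph_ball by blast

lemma trapped_set_subset: "trapped_set n A \<subseteq> graph_ball n"
  unfolding trapped_set_def escaping_vertices_def using graph_ball_subset by (blast intro: joined_refl)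

lemma joined_within_trapped_set:
  assumes "joined V A u w" "u \<in> trapped_set n A" "A \<subseteq> ball_edges n"
  shows "joined V (A \<inter> edges_within (trapped_set n A)) u w"
proof -
  have closed: "v \<in> trapped_set n A" if "{a, v} \<in> A" "a \<in> trapped_set n A" "v \<in> V" for a v
  proof -
    from that assms(3) have ball: "a \<in> graph_ball (Suc n)" "v \<in> graph_ball (Suc n)"
      using ball_edge_vertices by blast+
    with that graph_ball_subset have "joined V A a v" by (blast intro: joined_step joined_refl)
    with ball that show ?thesis
      unfolding trapped_set_def escaping_vertices_def by (blast intro: joined_trans)
  qed
  have "joined (V \<inter> trapped_set n A) {e\<in>A. e \<subseteq> trapped_set n A} u w"
    using assms(1,2) closed by (rule joined_within_closed)
  then show ?thesis
    using assms(3) ball_edges_subset by (elim joined_mono) (auto simp: edges_within_def)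
qed

lemma escaping_vertices_remove_edges_within:
  assumes "A \<subseteq> ball_edges n" "trapped_set n A = S \<or> trapped_set n (A - edges_within S) = S"
  shows "escaping_vertices n (A - edges_within S) = escaping_vertices n A"
proof
  show "escaping_vertices n (A - edges_within S) \<subseteq> escaping_vertices n A"
    by (rule escaping_vertices_mono) blast
  show "escaping_vertices n A \<subseteq> escaping_vertices n (A - edges_within S)"
  proof
    fix v assume "v \<in> escaping_vertices n A"
    then obtain y where v: "v \<in> graph_ball (Suc n)" "joined V A v y" "y \<notin> graph_ball n"
      unfolding escaping_vertices_def by blast
    have "joined V (A - edges_within S) v y"
    proof (rule joined_remove_edges[OF v(2)])
      fix u w assume uw: "{u, w} \<in> A" "u \<in> V" "joined V (A - edges_within S) w y"
      with assms(1) have "u \<in> graph_ball (Suc n)" "w \<in> graph_ball (Suc n)"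
        using ball_edge_vertices by blast+
      from assms(2) show "{u, w} \<notin> edges_within S"
      proof
        assume "trapped_set n A = S"
        moreover from uw have "joined V A u y" by (blast intro: joined_step joined_mono)
        ultimately have "u \<notin> S"
          using \<open>u \<in> graph_ball (Suc n)\<close> v(3) unfolding trapped_set_def escaping_vertices_def by blast
        then show ?thesis unfolding edges_within_def by blast
      next
        assume "trapped_set n (A - edges_within S) = S"
        with uw have "w \<notin> S"
          using \<open>w \<in> graph_ball (Suc n)\<close> v(3) unfolding trapped_set_def escaping_vertices_def by blast
        then show ?thesis unfolding edges_within_def by blast
      qed
    qed
    with v show "v \<in> escaping_vertices n (A - edges_within S)"
      unfolding escaping_vertices_def by blast
  qed
qed

lemma trapped_set_remove_edges_within:
  "A \<subseteq> ball_edges n \<Longrightarrow> trapped_set n (A - edges_within S) = S \<longleftrightarrow> trapped_set n A = S"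
  using escaping_vertices_remove_edges_within[of A n S] unfolding trapped_set_def by metis

lemma closed_pivotal_iff:
  assumes A: "A \<subseteq> ball_edges n" and S: "trapped_set n A = S" "x \<in> S" and e: "e \<in> ball_edges n"
  shows "closed_pivotal n e A \<longleftrightarrow> e \<in> eboundary E S \<and> (\<exists>y\<in>e. joined V (A \<inter> edges_within S) x y)"
proof
  assume piv: "closed_pivotal n e A"
  then obtain w where w: "joined V (insert e A) x w" "w \<notin> graph_ball n"
    unfolding closed_pivotal_def escapes_def by blast
  from piv have "\<not> escapes n A" unfolding closed_pivotal_def by blast
  with joined_insert_edgeD[OF w(1)] w(2) obtain a b where ab: "e = {a, b}" "joined V A x a" "joined V A b w"
    unfolding escapes_def by blast
  from e ab(1) have "a \<in> graph_ball (Suc n)" "b \<in> graph_ball (Suc n)" using ball_edge_vertices by blast+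
  with ab w(2) S have "b \<notin> S" "a \<in> S"
    unfolding trapped_set_def escaping_vertices_def by (blast intro: joined_trans)+
  with e ab(1) ball_edges_subset have "e \<in> eboundary E S" unfolding eboundary_def by blast
  moreover have "joined V (A \<inter> edges_within S) x a"
    using joined_within_trapped_set[OF ab(2) _ A] S by simp
  ultimately show "e \<in> eboundary E S \<and> (\<exists>y\<in>e. joined V (A \<inter> edges_within S) x y)" using ab(1) by blast
next
  assume "e \<in> eboundary E S \<and> (\<exists>y\<in>e. joined V (A \<inter> edges_within S) x y)"
  then obtain y z y' where yz: "e = {y, z}" "y \<in> S" "z \<notin> S" "y' \<in> e"
    and xy': "joined V (A \<inter> edges_within S) x y'"
    unfolding eboundary_def by blast
  have "y' \<in> S" using joined_stays_within[OF xy' S(2)] by (auto simp: edges_within_def)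
  with yz have xy: "joined V A x y" using xy' by (auto elim: joined_mono)
  from e yz(1) have yb: "y \<in> graph_ball (Suc n)" "z \<in> graph_ball (Suc n)" using ball_edge_vertices by blast+
  with yz(3) S(1) obtain w where w: "joined V A z w" "w \<notin> graph_ball n"
    unfolding trapped_set_def escaping_vertices_def by blast
  have yV: "y \<in> V" using yb graph_ball_subset by blast
  have "e \<notin> A"
  proof
    assume "e \<in> A"
    with yz(1) w(1) yV have "joined V A y w" by (blast intro: joined_step)
    with yb w(2) yz(2) S(1) show False unfolding trapped_set_def escaping_vertices_def by blast
  qed
  moreover have "joined V (insert e A) x w"
    using joined_trans[OF joined_mono[OF xy] joined_step[OF _ yV joined_mono[OF w(1)]]] yz(1) by auto
  ultimately show "closed_pivotal n e A"
    using w(2) not_escapes_iff S unfolding closed_pivotal_def escapes_def by blast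
qed

lemma eboundary_subset_ball_edges: "S \<subseteq> graph_ball n \<Longrightarrow> eboundary E S \<subseteq> ball_edges n"
  unfolding eboundary_def ball_edges_def edges_within_def
  using graph_ball_step graph_ball_Suc_mono by blast

text \<open>Independence of the events \<open>trapped_set n A = S\<close> and "\<open>x\<close> reaches \<open>e\<close> inside \<open>S\<close>", which depend on
  disjoint sets of edges.\<close>

lemma bern_prob_trapped_closed_pivotal:
  assumes S: "S \<subseteq> graph_ball n" "x \<in> S" and e: "e \<in> ball_edges n"
  shows "bern_prob (ball_edges n) r (\<lambda>A. trapped_set n A = S \<and> closed_pivotal n e A) =
    bern_prob (ball_edges n) r (\<lambda>A. trapped_set n A = S) * (if e \<in> eboundary E S then reach_prob r S e else 0)"
proof -
  let ?F = "ball_edges n - edges_within S" and ?G = "edges_within S"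
  let ?R = "\<lambda>B. e \<in> eboundary E S \<and> (\<exists>y\<in>e. joined V B x y)"
  have G: "?G \<subseteq> ball_edges n"
    unfolding ball_edges_def using S graph_ball_Suc_mono by (intro edges_within_mono) blast
  have fin: "finite ?F" "finite ?G" using finite_ball_edges G finite_subset by auto
  have split: "ball_edges n = ?F \<union> ?G" using G by blast
  have trapped: "trapped_set n A = S \<longleftrightarrow> trapped_set n (A \<inter> ?F) = S" if "A \<subseteq> ball_edges n" for A
  proof -
    from that have "A \<inter> ?F = A - edges_within S" by blast
    then show ?thesis using trapped_set_remove_edges_within[OF that, of S] by simp
  qed
  have "bern_prob (ball_edges n) r (\<lambda>A. trapped_set n A = S \<and> closed_pivotal n e A)
      = bern_prob (?F \<union> ?G) r (\<lambda>A. trapped_set n (A \<inter> ?F) = S \<and> ?R (A \<inter> ?G))"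
    unfolding split[symmetric] using trapped closed_pivotal_iff[OF _ _ S(2) e]
    by (intro bern_prob_cong) blast
  also have "\<dots> = bern_prob ?F r (\<lambda>B. trapped_set n B = S) * bern_prob ?G r ?R"
    using fin by (intro bern_prob_product) auto
  also have "bern_prob ?F r (\<lambda>B. trapped_set n B = S) = bern_prob (ball_edges n) r (\<lambda>A. trapped_set n A = S)"
  proof -
    have "bern_prob (ball_edges n) r (\<lambda>A. trapped_set n (A \<inter> ?F) = S) = bern_prob ?F r (\<lambda>B. trapped_set n B = S)"
      using finite_ball_edges by (rule bern_prob_marginal) blast
    moreover have "bern_prob (ball_edges n) r (\<lambda>A. trapped_set n (A \<inter> ?F) = S)
        = bern_prob (ball_edges n) r (\<lambda>A. trapped_set n A = S)"
      using trapped by (intro bern_prob_cong) blast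
    ultimately show ?thesis by simp
  qed
  also have "bern_prob ?G r ?R = (if e \<in> eboundary E S then reach_prob r S e else 0)"
    using fin by (simp add: reach_prob_def bern_prob_const)
  finally show ?thesis .
qed

lemma bern_prob_trapped_le_closed_pivotal:
  assumes S: "S \<subseteq> graph_ball n" and r: "0 \<le> r" "r \<le> 1" and c: "0 \<le> c"
    and hyp: "x \<in> S \<Longrightarrow> c \<le> (\<Sum>e\<in>eboundary E S. reach_prob r S e)"
  shows "c * bern_prob (ball_edges n) r (\<lambda>A. trapped_set n A = S \<and> x \<in> S)
    \<le> (\<Sum>e\<in>ball_edges n. bern_prob (ball_edges n) r (\<lambda>A. trapped_set n A = S \<and> closed_pivotal n e A))"
proof (cases "x \<in> S")
  case True
  let ?P = "bern_prob (ball_edges n) r (\<lambda>A. trapped_set n A = S)"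
  have "c * bern_prob (ball_edges n) r (\<lambda>A. trapped_set n A = S \<and> x \<in> S) = ?P * c"
    using True by simp
  also have "\<dots> \<le> ?P * (\<Sum>e\<in>eboundary E S. reach_prob r S e)"
    using True hyp r by (intro mult_left_mono bern_prob_nonneg)
  also have "(\<Sum>e\<in>eboundary E S. reach_prob r S e)
      = (\<Sum>e\<in>ball_edges n. if e \<in> eboundary E S then reach_prob r S e else 0)"
    using sum.inter_restrict[OF finite_ball_edges[of n], of "reach_prob r S" "eboundary E S"]
      eboundary_subset_ball_edges[OF S] by (simp add: Int_absorb1)
  also have "?P * \<dots> = (\<Sum>e\<in>ball_edges n. ?P * (if e \<in> eboundary E S then reach_prob r S e else 0))"
    by (rule sum_distrib_left)
  also have "\<dots> = (\<Sum>e\<in>ball_edges n. bern_prob (ball_edges n) r (\<lambda>A. trapped_set n A = S \<and> closed_pivotal n e A))"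
    using S True by (simp add: bern_prob_trapped_closed_pivotal)
  finally show ?thesis .
next
  case False
  then show ?thesis using r by (simp add: bern_prob_const finite_ball_edges sum_nonneg bern_prob_nonneg)
qed

lemma bern_prob_closed_pivotal_le:
  assumes e: "e \<in> ball_edges n" and r: "0 \<le> r" "r \<le> 1"
  shows "bern_prob (ball_edges n) r (closed_pivotal n e)
    \<le> bern_prob (ball_edges n - {e}) r (\<lambda>A. escapes n (insert e A)) - bern_prob (ball_edges n - {e}) r (escapes n)"
proof -
  let ?G = "ball_edges n - {e}"
  let ?P = "bern_prob ?G r (\<lambda>A. escapes n (insert e A) \<and> \<not> escapes n A)"
  have G: "finite ?G" "e \<notin> ?G" "insert e ?G = ball_edges n" using finite_ball_edges e by auto
  have "bern_prob (ball_edges n) r (closed_pivotal n e)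
      = r * bern_prob ?G r (\<lambda>A. closed_pivotal n e (insert e A)) + (1 - r) * bern_prob ?G r (closed_pivotal n e)"
    using bern_prob_insert[OF G(1,2)] G(3) by metis
  also have "bern_prob ?G r (\<lambda>A. closed_pivotal n e (insert e A)) = 0"
    using G by (intro bern_prob_impossible) (auto simp: closed_pivotal_def)
  also have "bern_prob ?G r (closed_pivotal n e) = ?P"
    by (intro bern_prob_cong) (auto simp: closed_pivotal_def)
  finally have "bern_prob (ball_edges n) r (closed_pivotal n e) \<le> ?P"
    using r bern_prob_nonneg[of r ?G] by (simp add: mult_left_le_one_le)
  also have "bern_prob ?G r (\<lambda>A. escapes n (insert e A) \<and> escapes n A) = bern_prob ?G r (escapes n)"
    by (intro bern_prob_cong) (blast intro: escapes_mono)
  then have "?P = bern_prob ?G r (\<lambda>A. escapes n (insert e A)) - bern_prob ?G r (escapes n)"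
    using bern_prob_split[of ?G r "\<lambda>A. escapes n (insert e A)" "escapes n"] by simp
  finally show ?thesis .
qed

text \<open>The differential inequality of Duminil-Copin and Tassion: the sum over pivotal edges is
  reorganised according to the value \<open>S\<close> of the trapped set.\<close>

lemma escape_prob_deriv_ge:
  assumes r: "0 \<le> r" "r \<le> 1" and c: "0 \<le> c"
    and hyp: "\<And>S. S \<subseteq> graph_ball n \<Longrightarrow> x \<in> S \<Longrightarrow> c \<le> (\<Sum>e\<in>eboundary E S. reach_prob r S e)"
  shows "c * (1 - bern_prob (ball_edges n) r (escapes n)) \<le> bern_deriv (ball_edges n) r (escapes n)"
proof -
  let ?F = "ball_edges n" and ?T = "Pow (graph_ball n)"
  have partition: "bern_prob ?F r Q = (\<Sum>S\<in>?T. bern_prob ?F r (\<lambda>A. trapped_set n A = S \<and> Q A))" for Q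
    using finite_graph_ball trapped_set_subset by (intro bern_prob_partition) auto
  have "1 - bern_prob ?F r (escapes n) = bern_prob ?F r (\<lambda>A. \<not> escapes n A)"
    using finite_ball_edges by (rule bern_prob_not[symmetric])
  also have "\<dots> = bern_prob ?F r (\<lambda>A. x \<in> trapped_set n A)"
    using not_escapes_iff by (intro bern_prob_cong) blast
  finally have "c * (1 - bern_prob ?F r (escapes n)) = c * bern_prob ?F r (\<lambda>A. x \<in> trapped_set n A)"
    by simp
  also have "\<dots> = (\<Sum>S\<in>?T. c * bern_prob ?F r (\<lambda>A. trapped_set n A = S \<and> x \<in> trapped_set n A))"
    unfolding partition[of "\<lambda>A. x \<in> trapped_set n A"] sum_distrib_left ..
  also have "\<dots> = (\<Sum>S\<in>?T. c * bern_prob ?F r (\<lambda>A. trapped_set n A = S \<and> x \<in> S))"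
    by (intro sum.cong refl arg_cong2[where f = "(*)"] bern_prob_cong) auto
  also have "\<dots> \<le> (\<Sum>S\<in>?T. \<Sum>e\<in>?F. bern_prob ?F r (\<lambda>A. trapped_set n A = S \<and> closed_pivotal n e A))"
    using r c hyp by (intro sum_mono bern_prob_trapped_le_closed_pivotal) auto
  also have "\<dots> = (\<Sum>e\<in>?F. bern_prob ?F r (closed_pivotal n e))"
    by (subst sum.swap) (simp only: partition[of "closed_pivotal n _", symmetric])
  also have "\<dots> \<le> bern_deriv ?F r (escapes n)"
    unfolding bern_deriv_def using r by (intro sum_mono bern_prob_closed_pivotal_le)
  finally show ?thesis .
qed

lemma reach_prob_mono_param:
  assumes "finite S" "0 \<le> p" "p \<le> r" "r \<le> 1"
  shows "reach_prob p S e \<le> reach_prob r S e"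
  unfolding reach_prob_def using assms finite_edges_within
  by (intro bern_prob_mono_param) (auto simp: upclosed_def intro: joined_mono)

definition root_component :: "'v set \<Rightarrow> 'v set" where
  "root_component S = {v. joined V (edges_within S) x v}"

lemma root_component_closed:
  "{a, b} \<in> edges_within S \<Longrightarrow> a \<in> root_component S \<Longrightarrow> b \<in> root_component S"
  using edges_within_subset edge_vertices unfolding root_component_def by (blast intro: joined_snoc)

lemma root_component_subset: "x \<in> S \<Longrightarrow> root_component S \<subseteq> S"
  unfolding root_component_def by (auto elim: joined_stays_within simp: edges_within_def)

lemma root_in_root_component: "x \<in> root_component S"
  unfolding root_component_def using root_vertex by (blast intro: joined_refl)

lemma joined_within_root_component:
  assumes "joined V F u v" "u \<in> root_component S" "F \<subseteq> edges_within S"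
  shows "joined (V \<inter> root_component S) (F \<inter> edges_within (root_component S)) u v"
proof -
  have "joined (V \<inter> root_component S) {e\<in>F. e \<subseteq> root_component S} u v"
    using assms root_component_closed by (intro joined_within_closed) blast+
  then show ?thesis using assms(3) edges_within_subset by (elim joined_mono) (auto simp: edges_within_def)
qed

lemma conn_set_root_component:
  assumes "finite S" "x \<in> S"
  shows "conn_set V E x (root_component S)"
proof -
  have "joined (root_component S) E u v" if "u \<in> root_component S" "v \<in> root_component S" for u v
  proof -
    from that have "joined V (edges_within S) u v"
      unfolding root_component_def by (blast intro: joined_trans joined_sym)
    with that(1) show ?thesis
      by (elim joined_within_root_component[THEN joined_mono]) (auto simp: edges_within_def)
  qed
  with assms root_component_subset[of S] root_in_root_component[of S] show ?thesis
    unfolding conn_set_iff root_component_def by (blast intro: finite_subset dest: joined_imp_mem)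
qed

lemma eboundary_root_component_subset:
  assumes "x \<in> S"
  shows "eboundary E (root_component S) \<subseteq> eboundary E S"
proof
  fix e assume "e \<in> eboundary E (root_component S)"
  then obtain y z where yz: "e \<in> E" "e = {y, z}" "y \<in> root_component S" "z \<notin> root_component S"
    unfolding eboundary_def by blast
  with assms root_component_closed[of y z S] root_component_subset[of S] have "z \<notin> S"
    unfolding edges_within_def by blast
  with yz assms root_component_subset[of S] show "e \<in> eboundary E S" unfolding eboundary_def by blast
qed

lemma reach_prob_root_component:
  assumes "finite S" "x \<in> S"
  shows "reach_prob r (root_component S) e = reach_prob r S e"
proof -
  have "reach_prob r S e
      = bern_prob (edges_within S) r (\<lambda>A. \<exists>y\<in>e. joined V (A \<inter> edges_within (root_component S)) x y)"
    unfolding reach_prob_def using root_in_root_component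
    by (intro bern_prob_cong) (blast dest: joined_within_root_component intro: joined_mono)
  also have "\<dots> = reach_prob r (root_component S) e"
    unfolding reach_prob_def using assms root_component_subset
    by (intro bern_prob_marginal finite_edges_within edges_within_mono)
  finally show ?thesis by simp
qed

lemma reach_sum_ge_if_phi_ge:
  assumes phi: "\<And>S. conn_set V E x S \<Longrightarrow> c \<le> phi p S" and pr: "0 \<le> p" "p \<le> r" "r \<le> 1"
    and S: "finite S" "S \<subseteq> V" "x \<in> S"
  shows "c \<le> (\<Sum>e\<in>eboundary E S. reach_prob r S e)"
proof -
  let ?C = "root_component S"
  have C: "conn_set V E x ?C" using S by (intro conn_set_root_component)
  have "c \<le> phi p ?C" using phi C .
  also have "\<dots> \<le> (\<Sum>e\<in>eboundary E ?C. reach_prob r S e)"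
    unfolding phi_def
  proof (rule sum_mono)
    fix e
    have "p * reach_prob p ?C e \<le> reach_prob p ?C e"
      using reach_prob_nonneg[of p ?C e] pr by (simp add: mult_left_le_one_le)
    also have "\<dots> \<le> reach_prob r S e"
      using S pr by (simp add: reach_prob_root_component reach_prob_mono_param)
    finally show "p * reach_prob p ?C e \<le> reach_prob r S e" .
  qed
  also have "\<dots> \<le> (\<Sum>e\<in>eboundary E S. reach_prob r S e)"
    using S finite_eboundary eboundary_root_component_subset reach_prob_nonneg pr
    by (intro sum_mono2) auto
  finally show ?thesis .
qed

text \<open>Integrating the differential inequality over \<open>[p, q]\<close>.\<close>

lemma escape_prob_ge:
  assumes pq: "0 \<le> p" "p < q" "q \<le> 1" and c: "0 < c"
    and phi: "\<And>S. conn_set V E x S \<Longrightarrow> c \<le> phi p S"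
  shows "c * (q - p) / (1 + c * (q - p)) \<le> bern_prob (ball_edges n) q (escapes n)"
proof -
  let ?\<theta> = "\<lambda>r. bern_prob (ball_edges n) r (escapes n)"
  let ?K = "c * (1 - ?\<theta> q)"
  have "?\<theta> p - ?K * p \<le> ?\<theta> q - ?K * q"
  proof (rule DERIV_nonneg_imp_nondecreasing[of p q])
    fix r assume r: "p \<le> r" "r \<le> q"
    have "?\<theta> r \<le> ?\<theta> q"
      using r pq finite_ball_edges upclosed_escapes by (intro bern_prob_mono_param) auto
    then have "?K \<le> c * (1 - ?\<theta> r)" using c by (simp add: mult_left_mono)
    also have "\<dots> \<le> bern_deriv (ball_edges n) r (escapes n)"
    proof (rule escape_prob_deriv_ge)
      fix S assume S: "S \<subseteq> graph_ball n" "x \<in> S"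
      then have "finite S" "S \<subseteq> V" using finite_graph_ball[of n] graph_ball_subset finite_subset by blast+
      with S r pq show "c \<le> (\<Sum>e\<in>eboundary E S. reach_prob r S e)"
        by (intro reach_sum_ge_if_phi_ge[OF phi]) auto
    qed (use r pq c in auto)
    finally have "0 \<le> bern_deriv (ball_edges n) r (escapes n) - ?K" by simp
    moreover have "((\<lambda>r. ?\<theta> r - ?K * r) has_real_derivative bern_deriv (ball_edges n) r (escapes n) - ?K * 1) (at r)"
      by (intro DERIV_diff DERIV_cmult has_real_derivative_bern_prob finite_ball_edges DERIV_ident)
    ultimately show "\<exists>y. ((\<lambda>r. ?\<theta> r - ?K * r) has_real_derivative y) (at r) \<and> 0 \<le> y" by auto
  qed (use pq in simp)
  moreover have "0 \<le> ?\<theta> p" using pq by (intro bern_prob_nonneg) auto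
  ultimately have "c * (q - p) \<le> ?\<theta> q * (1 + c * (q - p))" by (simp add: algebra_simps)
  moreover have "0 < 1 + c * (q - p)" using c pq by (simp add: add_pos_nonneg)
  ultimately show ?thesis by (simp add: divide_le_eq)
qed

lemma escape_event_eq:
  "{\<omega>\<in>space (perc E r). \<exists>y. joined V {e\<in>E. \<omega> e} x y \<and> y \<notin> graph_ball n}
    = {\<omega>\<in>space (perc E r). escapes n {e\<in>ball_edges n. \<omega> e}}"
proof -
  have "(\<exists>y. joined V {e\<in>E. \<omega> e} x y \<and> y \<notin> graph_ball n) \<longleftrightarrow> escapes n {e\<in>ball_edges n. \<omega> e}" for \<omega>
  proof
    assume "\<exists>y. joined V {e\<in>E. \<omega> e} x y \<and> y \<notin> graph_ball n"
    then obtain y where "joined V {e\<in>E. \<omega> e} x y" "y \<notin> graph_ball n" by blast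
    from joined_exits_graph_ball[OF this(1) root_in_graph_ball this(2)] obtain y' where
      "y' \<notin> graph_ball n" "joined V ({e\<in>E. \<omega> e} \<inter> edges_within (graph_ball (Suc n))) x y'"
      by blast
    moreover have "{e\<in>E. \<omega> e} \<inter> edges_within (graph_ball (Suc n)) = {e\<in>ball_edges n. \<omega> e}"
      unfolding ball_edges_def using edges_within_subset by blast
    ultimately show "escapes n {e\<in>ball_edges n. \<omega> e}" unfolding escapes_def by auto
  next
    assume "escapes n {e\<in>ball_edges n. \<omega> e}"
    then have "escapes n {e\<in>E. \<omega> e}"
      by (rule escapes_mono[rotated]) (use ball_edges_subset in blast)
    then show "\<exists>y. joined V {e\<in>E. \<omega> e} x y \<and> y \<notin> graph_ball n" unfolding escapes_def .
  qed
  then show ?thesis by simp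
qed

lemma Prob_conn_inf_ge:
  assumes r: "0 \<le> r" "r \<le> 1" and \<delta>: "\<And>n. \<delta> \<le> bern_prob (ball_edges n) r (escapes n)"
  shows "\<delta> \<le> Prob E r (conn_inf V E x)"
proof -
  interpret prob_space "perc E r" by (rule prob_space_perc)
  define A where "A n = {\<omega>\<in>space (perc E r). \<exists>y. joined V {e\<in>E. \<omega> e} x y \<and> y \<notin> graph_ball n}" for n
  have "A n \<in> sets (perc E r)" for n
    unfolding A_def escape_event_eq by (intro sets_perc_finite_event finite_ball_edges ball_edges_subset)
  moreover have "decseq A"
    unfolding decseq_def A_def using graph_ball_mono by blast
  ultimately have "(\<lambda>n. measure (perc E r) (A n)) \<longlonglongrightarrow> measure (perc E r) (\<Inter>n. A n)"
    by (intro finite_Lim_measure_decseq) auto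
  moreover have "measure (perc E r) (A n) = bern_prob (ball_edges n) r (escapes n)" for n
    unfolding A_def escape_event_eq using r
    by (intro measure_perc_finite_event finite_ball_edges ball_edges_subset) auto
  moreover have "(\<Inter>n. A n) = {\<omega>\<in>space (perc E r). conn_inf V E x \<omega>}"
    unfolding A_def conn_inf_iff by blast
  ultimately have "(\<lambda>n. bern_prob (ball_edges n) r (escapes n)) \<longlonglongrightarrow> Prob E r (conn_inf V E x)"
    unfolding Prob_def by simp
  then show ?thesis using \<delta> by (intro LIMSEQ_le_const) auto
qed

lemma Prob_conn_inf_pos_if_phi_ge:
  assumes "0 \<le> p" "p < q" "q \<le> 1" "0 < c" "\<And>S. conn_set V E x S \<Longrightarrow> c \<le> phi p S"
  shows "0 < Prob E q (conn_inf V E x)"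
proof -
  have "0 < c * (q - p) / (1 + c * (q - p))" using assms by (simp add: add_pos_nonneg)
  also have "\<dots> \<le> Prob E q (conn_inf V E x)"
    using assms by (intro Prob_conn_inf_ge escape_prob_ge) auto
  finally show ?thesis .
qed

lemma Prob_conn_inf_pos_if_ge_1:
  assumes "1 \<le> r"
  shows "0 < Prob E r (conn_inf V E x)"
proof -
  have "escapes n (ball_edges n)" for n
  proof -
    obtain y where "y \<in> V" "y \<notin> graph_ball n" using vertex_outside_graph_ball by blast
    from joined_exits_graph_ball[OF joined_from_root[OF this(1)] root_in_graph_ball this(2)]
    obtain y' where "y' \<notin> graph_ball n" "joined V (E \<inter> ball_edges n) x y'"
      unfolding ball_edges_def by blast
    moreover have "E \<inter> ball_edges n = ball_edges n" using ball_edges_subset by blast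
    ultimately show ?thesis unfolding escapes_def by auto
  qed
  then have "1 \<le> Prob E 1 (conn_inf V E x)"
    by (intro Prob_conn_inf_ge) (auto simp: bern_prob_one finite_ball_edges)
  then show ?thesis unfolding Prob_def using perc_ge_1[OF assms, of E] by simp
qed

end

section \<open>Comparison of the thresholds\<close>

lemma cSup_eq_cSup_if_dense_below:
  fixes X Y :: "real set"
  assumes "X \<subseteq> Y" "0 \<in> X" "bdd_above Y" "\<And>p. 0 \<le> p \<Longrightarrow> p < Sup Y \<Longrightarrow> p \<in> X"
  shows "Sup X = Sup Y"
proof (rule antisym)
  show "Sup X \<le> Sup Y" using assms by (intro cSup_subset_mono) auto
  have "0 \<le> Sup X" using assms bdd_above_mono by (intro cSup_upper) auto
  show "Sup Y \<le> Sup X"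
  proof (rule ccontr)
    assume "\<not> Sup Y \<le> Sup X"
    then have "(Sup X + Sup Y) / 2 \<in> X" using \<open>0 \<le> Sup X\<close> assms(4) by simp
    then have "(Sup X + Sup Y) / 2 \<le> Sup X" using assms bdd_above_mono by (intro cSup_upper) auto
    with \<open>\<not> Sup Y \<le> Sup X\<close> show False by simp
  qed
qed

context percolation_graph
begin

lemma conn_inf_null_if_INF_vsum_eq_0:
  assumes "(INF C\<in>{C. vertex_cutset V E x C}. vsum V E x p C) = 0"
  shows "Prob E p (conn_inf V E x) = 0"
proof -
  have "ennreal (Prob E p (conn_inf V E x)) \<le> (INF C\<in>{C. vertex_cutset V E x C}. vsum V E x p C)"
    by (rule INF_greatest) (simp add: Prob_conn_inf_le_vsum)
  with assms Prob_nonneg[of E p] show ?thesis by (simp add: ennreal_le_iff2 order_antisym)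
qed

lemma conn_inf_null_if_INF_esum_eq_0:
  assumes "(INF C\<in>{C. edge_cutset V E x C}. esum V E x p C) = 0"
  shows "Prob E p (conn_inf V E x) = 0"
proof -
  have "ennreal (Prob E p (conn_inf V E x)) \<le> (INF C\<in>{C. edge_cutset V E x C}. esum V E x p C)"
    by (rule INF_greatest) (simp add: Prob_conn_inf_le_esum)
  with assms Prob_nonneg[of E p] show ?thesis by (simp add: ennreal_le_iff2 order_antisym)
qed

lemma less_1_if_conn_inf_null: "Prob E q (conn_inf V E x) = 0 \<Longrightarrow> q < 1"
  using Prob_conn_inf_pos_if_ge_1[of q] by (cases "1 \<le> q") auto

lemma INF_vertex_cutsets_eq_0_if_B_V:
  assumes "(INF C\<in>B_V V E x. vsum V E x p C) = 0"
  shows "(INF C\<in>{C. vertex_cutset V E x C}. vsum V E x p C) = 0"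
proof -
  have "B_V V E x \<subseteq> {C. vertex_cutset V E x C}"
    unfolding B_V_def conn_set_def using vertex_cutset_vboundary by blast
  then have "(INF C\<in>{C. vertex_cutset V E x C}. vsum V E x p C) \<le> (INF C\<in>B_V V E x. vsum V E x p C)"
    by (rule INF_superset_mono) simp
  with assms show ?thesis by simp
qed

lemma INF_edge_cutsets_eq_0_if_B_E:
  assumes "(INF C\<in>B_E V E x. esum V E x p C) = 0"
  shows "(INF C\<in>{C. edge_cutset V E x C}. esum V E x p C) = 0"
proof -
  have "B_E V E x \<subseteq> {C. edge_cutset V E x C}"
    unfolding B_E_def conn_set_def using edge_cutset_eboundary by blast
  then have "(INF C\<in>{C. edge_cutset V E x C}. esum V E x p C) \<le> (INF C\<in>B_E V E x. esum V E x p C)"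
    by (rule INF_superset_mono) simp
  with assms show ?thesis by simp
qed

lemma INF_B_V_eq_0_if_B_E:
  assumes "(INF C\<in>B_E V E x. esum V E x p C) = 0"
  shows "(INF C\<in>B_V V E x. vsum V E x p C) = 0"
proof -
  have "(INF C\<in>B_V V E x. vsum V E x p C) \<le> (INF C\<in>B_E V E x. esum V E x p C)"
  proof (rule INF_greatest)
    fix C assume "C \<in> B_E V E x"
    then obtain S where S: "C = eboundary E S" "conn_set V E x S" unfolding B_E_def by blast
    then have "vboundary V E S \<in> B_V V E x" unfolding B_V_def by blast
    then have "(INF C\<in>B_V V E x. vsum V E x p C) \<le> vsum V E x p (vboundary V E S)" by (rule INF_lower)
    also have "\<dots> \<le> esum V E x p C"
      using S vsum_vboundary_le_esum_eboundary unfolding conn_set_iff by simp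
    finally show "(INF C\<in>B_V V E x. vsum V E x p C) \<le> esum V E x p C" .
  qed
  with assms show ?thesis by simp
qed

lemma INF_B_E_at_0: "(INF C\<in>B_E V E x. esum V E x 0 C) = 0"
proof -
  have "conn_set V E x {x}" unfolding conn_set_iff using root_vertex by (auto intro: joined_refl)
  then have "eboundary E {x} \<in> B_E V E x" unfolding B_E_def by blast
  then have "(INF C\<in>B_E V E x. esum V E x 0 C) \<le> esum V E x 0 (eboundary E {x})" by (rule INF_lower)
  also have "\<dots> = 0" using esum_eboundary[of "{x}" 0] root_vertex by (simp add: phi_def)
  finally show ?thesis by simp
qed

text \<open>Otherwise \<open>\<phi>\<^sub>p\<close> would be bounded below on connected sets, forcing \<open>\<theta>(q) > 0\<close>.\<close>

lemma INF_B_E_eq_0_below_null: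
  assumes p: "0 \<le> p" "p < q" and q: "Prob E q (conn_inf V E x) = 0"
  shows "(INF C\<in>B_E V E x. esum V E x p C) = 0"
proof (rule ccontr)
  let ?m = "INF C\<in>B_E V E x. esum V E x p C"
  assume "?m \<noteq> 0"
  then obtain r :: rat where "0 < ennreal (real_of_rat r)" "ennreal (real_of_rat r) < ?m"
    using ennreal_rat_dense[of 0 ?m] by (auto simp: zero_less_iff_neq_zero)
  then obtain c where c: "0 < c" "ennreal c \<le> ?m" by (intro that[of "real_of_rat r"]) auto
  have q1: "q < 1" using q by (rule less_1_if_conn_inf_null)
  have "c \<le> phi p S" if "conn_set V E x S" for S
  proof -
    from that have "eboundary E S \<in> B_E V E x" unfolding B_E_def by blast
    then have "?m \<le> esum V E x p (eboundary E S)" by (rule INF_lower)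
    with c(2) have "ennreal c \<le> esum V E x p (eboundary E S)" by (rule order_trans)
    also have "\<dots> = ennreal (phi p S)"
      using that p q1 unfolding conn_set_iff by (intro esum_eboundary) auto
    finally show ?thesis using phi_nonneg p q1 by (simp add: ennreal_le_iff)
  qed
  with p q1 c have "0 < Prob E q (conn_inf V E x)" by (intro Prob_conn_inf_pos_if_phi_ge) auto
  with q show False by simp
qed

lemma p_c_eq_Sup_sandwich:
  assumes lower: "\<And>p. 0 \<le> p \<Longrightarrow> (INF C\<in>B_E V E x. esum V E x p C) = 0 \<Longrightarrow> P p"
    and upper: "\<And>p. 0 \<le> p \<Longrightarrow> P p \<Longrightarrow> Prob E p (conn_inf V E x) = 0"
  shows "Sup {p. 0 \<le> p \<and> P p} = p_c V E x"
proof -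
  let ?Y = "{p. 0 \<le> p \<and> Prob E p (conn_inf V E x) = 0}"
  have P0: "P 0" using lower INF_B_E_at_0 by simp
  have bdd: "bdd_above ?Y"
    using less_1_if_conn_inf_null by (intro bdd_aboveI[of _ 1]) (auto intro: less_imp_le)
  have "P p" if "0 \<le> p" "p < Sup ?Y" for p
  proof -
    from that(2) obtain q where "q \<in> ?Y" "p < q"
      using less_cSup_iff[OF _ bdd] P0 upper by blast
    with that(1) show ?thesis using lower INF_B_E_eq_0_below_null by blast
  qed
  then show ?thesis
    unfolding p_c_def using upper P0 bdd by (intro cSup_eq_cSup_if_dense_below) auto
qed

end

theorem theorem2p9:
  fixes V :: "'v set" and E :: "'v set set" and x :: 'v
  assumes "simple_graph V E"
    and "locally_finite V E"
    and "connected_graph V E"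
    and "infinite V"
    and "x \<in> V"
  shows "p''_cut_E V E x = p'_cut_E V E x \<and> p'_cut_E V E x = p''_cut_V V E x \<and>
         p''_cut_V V E x = p'_cut_V V E x \<and> p'_cut_V V E x = p_c V E x"
proof -
  interpret percolation_graph V E x using assms by unfold_locales
  have "p''_cut_E V E x = p_c V E x"
    unfolding p''_cut_E_def
    by (rule p_c_eq_Sup_sandwich) (auto intro: conn_inf_null_if_INF_esum_eq_0 INF_edge_cutsets_eq_0_if_B_E)
  moreover have "p'_cut_E V E x = p_c V E x"
    unfolding p'_cut_E_def
    by (rule p_c_eq_Sup_sandwich) (auto intro: conn_inf_null_if_INF_esum_eq_0 INF_edge_cutsets_eq_0_if_B_E)
  moreover have "p''_cut_V V E x = p_c V E x"
    unfolding p''_cut_V_def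
    by (rule p_c_eq_Sup_sandwich)
      (auto intro: conn_inf_null_if_INF_vsum_eq_0 INF_vertex_cutsets_eq_0_if_B_V INF_B_V_eq_0_if_B_E)
  moreover have "p'_cut_V V E x = p_c V E x"
    unfolding p'_cut_V_def
    by (rule p_c_eq_Sup_sandwich)
      (auto intro: conn_inf_null_if_INF_vsum_eq_0 INF_vertex_cutsets_eq_0_if_B_V INF_B_V_eq_0_if_B_E)
  ultimately show ?thesis by simp
qed

end
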